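(* Let $f:\mathbb{R}^d\to\mathbb{R}$ be $\beta$-smooth and $\mu$-strongly convex with minimizer $w^*$ and $f^*=f(w^* )$. Run $K$ workers with partial-synchronization local SGD as described in the context, from a common initial point $w_0$, for $R$ iterations, with layer synchronization indices $H_l\le H$ for $l=1,\dots,L$, and with stepsizes $\eta_r=\frac{4}{\mu(a+r)}$ where the shift parameter satisfies $a>\max\{16\kappa,H\}$ with $\kappa=\frac{\beta}{\mu}$. Assume that for all $r=0,1,\dots,R-1$ and all $k\in\{1,\dots,K\}$, $\mathbb{E}_{\xi_r^k}\|\nabla f(w_r^k;\xi_r^k)-\nabla f(w_r^k)\|^2\le\sigma^2$ and $\mathbb{E}_{\xi_r^k}\|\nabla f(w_r^k;\xi_r^k)\|^2\le G^2$. Let $p_r=(a+r)^2$, $S_R=\sum_{r=0}^{R-1}p_r$ (so that $S_R\ge \frac13 R^3$), and $\hat w_R=\frac{1}{KS_R}\sum_{k=1}^K\sum_{r=0}^{R-1}p_r w_r^k$. Then $$\mathbb{E}f(\hat w_R)-f^*\le \frac{\mu a^3}{2S_R}\|w_0-w^*\|^2+\frac{4R(R+2a)}{\mu K S_R}\sigma^2+\frac{256R}{\mu^2 S_R}G^2H^2\beta.$$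
   Context: Partial-synchronization local SGD: the parameter vector $w\in\mathbb{R}^d$ is split into $L$ layer blocks $w=(w^{1},\dots,w^{L})$. Each layer $l$ is assigned an index $H_l\in\{1,\dots,H\}$, where $H$ is the synchronization period. Worker $k\in\{1,\dots,K\}$ holds $w_r^k$ at iteration $r$ (all workers start at $w_0^k=w_0$), samples independent noise $\xi_r^k$, and computes the stochastic gradient $\nabla f(w_r^k;\xi_r^k)$ (an unbiased estimate of $\nabla f(w_r^k)$) of the full model; $\nabla^l f(w_r^k;\xi_r^k)$ denotes its block for layer $l$. The update for each layer $l$ is: $w_{r+1}^{k,l}=w_r^{k,l}-\eta_r\nabla^l f(w_r^k;\xi_r^k)$ if $r+1\not\equiv H_l \pmod H$, and $w_{r+1}^{k,l}=\frac1K\sum_{j=1}^K\big(w_r^{j,l}-\eta_r\nabla^l f(w_r^j;\xi_r^j)\big)$ if $r+1\equiv H_l\pmod H$. *)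

theory Defs
  imports "HOL-Analysis.Analysis" "HOL-Probability.Probability"
begin

definition smooth_with_grad :: "(real^'d \<Rightarrow> real) \<Rightarrow> (real^'d \<Rightarrow> real^'d) \<Rightarrow> real \<Rightarrow> bool" where
  "smooth_with_grad f grad \<beta> \<longleftrightarrow>
     (\<forall>w. (f has_derivative (\<lambda>h. grad w \<bullet> h)) (at w)) \<and>
     (\<forall>x y. norm (grad x - grad y) \<le> \<beta> * norm (x - y))"

definition strongly_convex :: "(real^'d \<Rightarrow> real) \<Rightarrow> real \<Rightarrow> bool" where
  "strongly_convex f \<mu> \<longleftrightarrow> \<mu> > 0 \<and>
     (\<forall>x y t. 0 \<le> t \<and> t \<le> 1 \<longrightarrow>
        f (t *\<^sub>R x + (1 - t) *\<^sub>R y) \<le> t * f x + (1 - t) * f y - \<mu> / 2 * t * (1 - t) * (norm (x - y))\<^sup>2)"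

text \<open>Coordinate i of the parameter vector belongs to layer (layer i); layer l has
  synchronization index Hl l.  Workers are 1..K.  psgd ... r k is w_r^k.\<close>
primrec psgd :: "real^'d \<Rightarrow> (real^'d \<Rightarrow> 'b \<Rightarrow> real^'d) \<Rightarrow> (nat \<Rightarrow> nat \<Rightarrow> 'b) \<Rightarrow> (nat \<Rightarrow> real)
     \<Rightarrow> nat \<Rightarrow> ('d \<Rightarrow> nat) \<Rightarrow> (nat \<Rightarrow> nat) \<Rightarrow> nat \<Rightarrow> nat \<Rightarrow> nat \<Rightarrow> real^'d" where
  "psgd w0 g xi eta H layer Hl K 0 k = w0"
| "psgd w0 g xi eta H layer Hl K (Suc r) k =
     (\<chi> i. if Suc r mod H = Hl (layer i) mod H
           then (\<Sum>j=1..K. psgd w0 g xi eta H layer Hl K r j $ i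
                      - eta r * g (psgd w0 g xi eta H layer Hl K r j) (xi r j) $ i) / real K
           else psgd w0 g xi eta H layer Hl K r k $ i
                      - eta r * g (psgd w0 g xi eta H layer Hl K r k) (xi r k) $ i)"

end

(* The average wbar_r = (1/K) sum_k w_r^k of the worker iterates follows plain SGD with the averaged
   stochastic gradient, whatever the synchronisation pattern, because averaging a layer commutes with
   the update. Conditioning on the past, the noise of round r is centred and independent across
   workers, and smoothness plus strong convexity give the one-step bound
     E|wbar_(r+1) - wstar|^2 + eta_r/2 * E(f(wbar_r) - fstar)
       <= (1 - mu eta_r) E|wbar_r - wstar|^2 + eta_r^2 sigma^2 / K + 2 beta eta_r E[(1/K) sum_k |wbar_r - w_r^k|^2].
   Every coordinate was last averaged fewer than H rounds ago and a > H keeps the step sizes within a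
   factor 2 over such a window, so the deviation term is at most 4 eta_r^2 G^2 H^2. Multiplying the
   r-th bound by mu (a + r)^3 / 4 makes the recursion telescope with weights (a + r)^2, and Jensen's
   inequality for f passes from the weighted average of the wbar_r to the output point. *)
theory Submission
  imports Defs
begin

section \<open>Smooth strongly convex functions\<close>

lemma smooth_has_real_derivative_along_line:
  assumes "smooth_with_grad f grad \<beta>"
  shows "((\<lambda>s. f (x + s *\<^sub>R h)) has_real_derivative (grad (x + s *\<^sub>R h) \<bullet> h)) (at s within S)"
proof -
  have f': "(f has_derivative (\<lambda>v. grad w \<bullet> v)) (at w)" for w
    using assms by (simp add: smooth_with_grad_def)
  have "((\<lambda>s. x + s *\<^sub>R h) has_derivative (\<lambda>s. s *\<^sub>R h)) (at s within S)"
    by (auto intro!: derivative_eq_intros)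
  from has_derivative_compose[OF this f']
  show ?thesis
    unfolding has_field_derivative_def by (rule has_derivative_eq_rhs) (auto simp: fun_eq_iff)
qed

lemma smooth_le_quadratic_upper_bound:
  assumes smooth: "smooth_with_grad f grad \<beta>"
  shows "f y \<le> f x + grad x \<bullet> (y - x) + \<beta> / 2 * (norm (y - x))\<^sup>2"
proof -
  define h where "h = y - x"
  define \<psi> where "\<psi> s = f (x + s *\<^sub>R h) - s * (grad x \<bullet> h) - \<beta> / 2 * s\<^sup>2 * (norm h)\<^sup>2" for s
  have "\<psi> 1 \<le> \<psi> 0"
  proof (rule DERIV_nonpos_imp_nonincreasing[of 0 1 \<psi>])
    fix s :: real assume "0 \<le> s" "s \<le> 1"
    have \<psi>': "(\<psi> has_real_derivative (grad (x + s *\<^sub>R h) - grad x) \<bullet> h - \<beta> * s * (norm h)\<^sup>2) (at s)"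
      unfolding \<psi>_def
      by (rule derivative_eq_intros smooth_has_real_derivative_along_line[OF smooth] | simp add: inner_diff_left)+
    have "(grad (x + s *\<^sub>R h) - grad x) \<bullet> h \<le> norm (grad (x + s *\<^sub>R h) - grad x) * norm h"
      by (rule norm_cauchy_schwarz)
    also have "\<dots> \<le> \<beta> * (s * norm h) * norm h"
      using smooth \<open>0 \<le> s\<close> unfolding smooth_with_grad_def
      by (metis add_diff_cancel_left' norm_scaleR abs_of_nonneg mult_right_mono norm_ge_zero)
    finally show "\<exists>y. (\<psi> has_real_derivative y) (at s) \<and> y \<le> 0"
      using \<psi>' by (auto simp: power2_eq_square mult.assoc)
  qed simp
  then show ?thesis by (simp add: \<psi>_def h_def)
qed

lemma strongly_convex_ge_quadratic_lower_bound:
  assumes smooth: "smooth_with_grad f grad \<beta>" and sconv: "strongly_convex f \<mu>"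
  shows "f x + grad x \<bullet> (y - x) + \<mu> / 2 * (norm (y - x))\<^sup>2 \<le> f y"
proof -
  define h where "h = y - x"
  have "((\<lambda>s. f (x + s *\<^sub>R h)) has_real_derivative (grad x \<bullet> h)) (at 0 within {0<..})"
    using smooth_has_real_derivative_along_line[OF smooth, of x h 0] by simp
  then have slope: "((\<lambda>s. (f (x + s *\<^sub>R h) - f x) / s) \<longlongrightarrow> grad x \<bullet> h) (at_right 0)"
    by (simp add: has_field_derivative_iff)
  have bound: "((\<lambda>s. f y - f x - \<mu> / 2 * (1 - s) * (norm h)\<^sup>2) \<longlongrightarrow> f y - f x - \<mu> / 2 * (1 - 0) * (norm h)\<^sup>2) (at_right 0)"
    by (intro tendsto_intros)
  have "\<forall>\<^sub>F s in at_right 0. (f (x + s *\<^sub>R h) - f x) / s \<le> f y - f x - \<mu> / 2 * (1 - s) * (norm h)\<^sup>2"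
    using eventually_at_right_real[OF zero_less_one]
  proof (rule eventually_mono)
    fix s :: real assume s: "s \<in> {0<..<1}"
    have "f (s *\<^sub>R y + (1 - s) *\<^sub>R x) \<le> s * f y + (1 - s) * f x - \<mu> / 2 * s * (1 - s) * (norm (y - x))\<^sup>2"
      using sconv s unfolding strongly_convex_def by auto
    moreover have "s *\<^sub>R y + (1 - s) *\<^sub>R x = x + s *\<^sub>R h"
      by (simp add: h_def algebra_simps)
    ultimately have "f (x + s *\<^sub>R h) - f x \<le> s * (f y - f x - \<mu> / 2 * (1 - s) * (norm h)\<^sup>2)"
      by (simp add: h_def algebra_simps)
    then show "(f (x + s *\<^sub>R h) - f x) / s \<le> f y - f x - \<mu> / 2 * (1 - s) * (norm h)\<^sup>2"
      using s by (simp add: divide_le_eq mult.commute)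
  qed
  from tendsto_le[OF _ bound slope this] show ?thesis
    by (simp add: h_def)
qed

lemma strongly_convex_imp_convex_on:
  fixes f :: "real^'d \<Rightarrow> real"
  assumes "strongly_convex f \<mu>"
  shows "convex_on UNIV f"
proof
  fix t :: real and x y :: "real^'d"
  assume t: "0 < t" "t < 1"
  have "f (t *\<^sub>R y + (1 - t) *\<^sub>R x) \<le> t * f y + (1 - t) * f x - \<mu> / 2 * t * (1 - t) * (norm (y - x))\<^sup>2"
    using assms t unfolding strongly_convex_def by auto
  moreover have "0 \<le> \<mu> / 2 * t * (1 - t) * (norm (y - x))\<^sup>2"
    using assms t unfolding strongly_convex_def by simp
  ultimately show "f ((1 - t) *\<^sub>R x + t *\<^sub>R y) \<le> (1 - t) * f x + t * f y"
    by (simp add: add.commute)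
qed simp

lemma strong_convexity_le_smoothness:
  fixes f :: "real^'d \<Rightarrow> real"
  assumes smooth: "smooth_with_grad f grad \<beta>" and sconv: "strongly_convex f \<mu>"
  shows "\<mu> \<le> \<beta>"
proof -
  obtain i :: 'd where True by blast
  define h :: "real^'d" where "h = axis i 1"
  have "f 0 + grad 0 \<bullet> (h - 0) + \<mu> / 2 * (norm (h - 0))\<^sup>2 \<le> f h"
    by (rule strongly_convex_ge_quadratic_lower_bound[OF smooth sconv])
  moreover have "f h \<le> f 0 + grad 0 \<bullet> (h - 0) + \<beta> / 2 * (norm (h - 0))\<^sup>2"
    by (rule smooth_le_quadratic_upper_bound[OF smooth])
  ultimately show ?thesis by (simp add: h_def)
qed

lemma smooth_norm_grad_squared_le:
  assumes smooth: "smooth_with_grad f grad \<beta>" and "\<beta> > 0" and min: "\<forall>v. f wstar \<le> f v"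
  shows "(norm (grad x))\<^sup>2 \<le> 2 * \<beta> * (f x - f wstar)"
proof -
  define y where "y = x - (1 / \<beta>) *\<^sub>R grad x"
  have "f wstar \<le> f y" using min by simp
  also have "f y \<le> f x + grad x \<bullet> (y - x) + \<beta> / 2 * (norm (y - x))\<^sup>2"
    by (rule smooth_le_quadratic_upper_bound[OF smooth])
  also have "grad x \<bullet> (y - x) = - (norm (grad x))\<^sup>2 / \<beta>"
    by (simp add: y_def power2_norm_eq_inner)
  also have "\<beta> / 2 * (norm (y - x))\<^sup>2 = (norm (grad x))\<^sup>2 / (2 * \<beta>)"
    using \<open>\<beta> > 0\<close> by (simp add: y_def power2_eq_square)
  finally show ?thesis
    using \<open>\<beta> > 0\<close> by (simp add: field_simps)
qed

lemma smooth_continuous_on: "smooth_with_grad f grad \<beta> \<Longrightarrow> continuous_on UNIV f"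
  by (auto simp: smooth_with_grad_def continuous_on_eq_continuous_within
      intro: has_derivative_continuous continuous_at_imp_continuous_at_within)

lemma smooth_continuous_on_grad:
  assumes "smooth_with_grad f grad \<beta>"
  shows "continuous_on UNIV grad"
proof (rule lipschitz_on_continuous_on)
  show "\<bar>\<beta>\<bar>-lipschitz_on UNIV grad"
    using assms unfolding lipschitz_on_def smooth_with_grad_def dist_norm
    by (auto intro: order_trans[OF _ mult_right_mono[OF abs_ge_self]])
qed

lemma neg_inner_le_Young:
  fixes u v :: "'a::real_inner"
  assumes "c > 0"
  shows "- 2 * (u \<bullet> v) \<le> c * (norm u)\<^sup>2 + (norm v)\<^sup>2 / c"
proof -
  have "0 \<le> (norm (c *\<^sub>R u + v))\<^sup>2 / c"
    using assms by simp
  also have "\<dots> = c * (norm u)\<^sup>2 + 2 * (u \<bullet> v) + (norm v)\<^sup>2 / c"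
    using assms unfolding power2_norm_eq_inner
    by (simp add: inner_add_left inner_add_right inner_commute field_simps power2_eq_square)
  finally show ?thesis by simp
qed

lemma norm_mean_squared_le:
  fixes v :: "'k \<Rightarrow> 'a::real_normed_vector" and A :: "'k set"
  defines "n \<equiv> real (card A)"
  shows "(norm ((1 / n) *\<^sub>R (\<Sum>k\<in>A. v k)))\<^sup>2 \<le> (1 / n) * (\<Sum>k\<in>A. (norm (v k))\<^sup>2)"
proof -
  have "(norm (\<Sum>k\<in>A. v k))\<^sup>2 \<le> (\<Sum>k\<in>A. norm (v k))\<^sup>2"
    by (simp add: norm_sum power_mono)
  also have "\<dots> \<le> n * (\<Sum>k\<in>A. (norm (v k))\<^sup>2)"
    unfolding n_def using sum_squared_le_sum_of_squares by (simp add: mult.commute)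
  finally have sum_le: "(norm (\<Sum>k\<in>A. v k))\<^sup>2 \<le> n * (\<Sum>k\<in>A. (norm (v k))\<^sup>2)" .
  have "(norm ((1 / n) *\<^sub>R (\<Sum>k\<in>A. v k)))\<^sup>2 = (1 / n)\<^sup>2 * (norm (\<Sum>k\<in>A. v k))\<^sup>2"
    by (simp add: n_def power_divide)
  also have "\<dots> \<le> (1 / n)\<^sup>2 * (n * (\<Sum>k\<in>A. (norm (v k))\<^sup>2))"
    using sum_le by (rule mult_left_mono) simp
  also have "\<dots> = (1 / n) * (\<Sum>k\<in>A. (norm (v k))\<^sup>2)"
    by (cases "n = 0") (simp_all add: power2_eq_square)
  finally show ?thesis .
qed

lemma smooth_strongly_convex_neg_inner_grad_le:
  assumes smooth: "smooth_with_grad f grad \<beta>" and sconv: "strongly_convex f \<mu>"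
    and min: "\<forall>v. f wstar \<le> f v" and "\<beta> > 0"
  shows "- 2 * ((y - wstar) \<bullet> grad x)
    \<le> 2 * \<beta> * (norm (y - x))\<^sup>2 - (f x - f wstar) - \<mu> * (norm (x - wstar))\<^sup>2"
proof -
  have "- 2 * ((y - x) \<bullet> grad x) \<le> 2 * \<beta> * (norm (y - x))\<^sup>2 + (norm (grad x))\<^sup>2 / (2 * \<beta>)"
    using neg_inner_le_Young[of "2 * \<beta>"] \<open>\<beta> > 0\<close> by simp
  moreover have "(norm (grad x))\<^sup>2 / (2 * \<beta>) \<le> f x - f wstar"
    using smooth_norm_grad_squared_le[OF smooth \<open>\<beta> > 0\<close> min, of x] \<open>\<beta> > 0\<close>
    by (simp add: field_simps)
  moreover have "f x + grad x \<bullet> (wstar - x) + \<mu> / 2 * (norm (wstar - x))\<^sup>2 \<le> f wstar"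
    by (rule strongly_convex_ge_quadratic_lower_bound[OF smooth sconv])
  moreover have "(y - wstar) \<bullet> grad x = (y - x) \<bullet> grad x - (wstar - x) \<bullet> grad x"
    by (simp add: inner_diff_left)
  ultimately show ?thesis
    by (simp add: norm_minus_commute inner_commute algebra_simps)
qed

lemma mean_neg_inner_grad_le:
  fixes x :: "'k \<Rightarrow> real^'d" and A :: "'k set"
  assumes smooth: "smooth_with_grad f grad \<beta>" and sconv: "strongly_convex f \<mu>"
    and min: "\<forall>v. f wstar \<le> f v" and "\<beta> > 0"
  defines "n \<equiv> real (card A)"
  shows "- 2 * ((y - wstar) \<bullet> ((1 / n) *\<^sub>R (\<Sum>k\<in>A. grad (x k))))
    \<le> 2 * \<beta> * ((1 / n) * (\<Sum>k\<in>A. (norm (y - x k))\<^sup>2)) - (1 / n) * (\<Sum>k\<in>A. f (x k) - f wstar)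
      - \<mu> * ((1 / n) * (\<Sum>k\<in>A. (norm (x k - wstar))\<^sup>2))"
proof -
  have "- 2 * ((y - wstar) \<bullet> ((1 / n) *\<^sub>R (\<Sum>k\<in>A. grad (x k)))) = (1 / n) * (\<Sum>k\<in>A. - 2 * ((y - wstar) \<bullet> grad (x k)))"
    by (simp add: inner_sum_right sum_distrib_left)
  also have "\<dots> \<le> (1 / n) * (\<Sum>k\<in>A. 2 * \<beta> * (norm (y - x k))\<^sup>2 - (f (x k) - f wstar) - \<mu> * (norm (x k - wstar))\<^sup>2)"
    unfolding n_def
    by (intro mult_left_mono sum_mono smooth_strongly_convex_neg_inner_grad_le[OF smooth sconv min \<open>\<beta> > 0\<close>]) simp_all
  finally show ?thesis
    by (simp add: sum_subtractf right_diff_distrib flip: sum_distrib_left)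
qed

lemma norm_mean_grad_squared_le:
  fixes x :: "'k \<Rightarrow> real^'d" and A :: "'k set"
  assumes smooth: "smooth_with_grad f grad \<beta>" and "\<beta> > 0" and min: "\<forall>v. f wstar \<le> f v"
  defines "n \<equiv> real (card A)"
  shows "(norm ((1 / n) *\<^sub>R (\<Sum>k\<in>A. grad (x k))))\<^sup>2 \<le> 2 * \<beta> * ((1 / n) * (\<Sum>k\<in>A. f (x k) - f wstar))"
proof -
  have "(norm ((1 / n) *\<^sub>R (\<Sum>k\<in>A. grad (x k))))\<^sup>2 \<le> (1 / n) * (\<Sum>k\<in>A. (norm (grad (x k)))\<^sup>2)"
    unfolding n_def by (rule norm_mean_squared_le)
  also have "\<dots> \<le> (1 / n) * (\<Sum>k\<in>A. 2 * \<beta> * (f (x k) - f wstar))"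
    unfolding n_def by (intro mult_left_mono sum_mono smooth_norm_grad_squared_le[OF smooth \<open>\<beta> > 0\<close> min]) simp_all
  finally show ?thesis
    by (simp add: sum_distrib_left mult_ac)
qed

lemma averaged_gradient_step:
  fixes x :: "'k \<Rightarrow> real^'d"
  assumes smooth: "smooth_with_grad f grad \<beta>" and sconv: "strongly_convex f \<mu>"
    and min: "\<forall>v. f wstar \<le> f v" and \<eta>: "0 < \<eta>" "\<eta> \<le> 1 / (4 * \<beta>)"
    and A: "finite A" "A \<noteq> {}"
  defines "n \<equiv> real (card A)"
  defines "xbar \<equiv> (1 / n) *\<^sub>R (\<Sum>k\<in>A. x k)" and "gbar \<equiv> (1 / n) *\<^sub>R (\<Sum>k\<in>A. grad (x k))"
  shows "(norm (xbar - wstar - \<eta> *\<^sub>R gbar))\<^sup>2 + \<eta> / 2 * (f xbar - f wstar)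
    \<le> (1 - \<mu> * \<eta>) * (norm (xbar - wstar))\<^sup>2 + 2 * \<beta> * \<eta> * ((1 / n) * (\<Sum>k\<in>A. (norm (xbar - x k))\<^sup>2))"
proof -
  have n: "n > 0" using A by (simp add: n_def card_gt_0_iff)
  have \<mu>: "\<mu> > 0" using sconv by (simp add: strongly_convex_def)
  then have \<beta>: "\<beta> > 0" using strong_convexity_le_smoothness[OF smooth sconv] by simp
  define u where "u = xbar - wstar"
  define gap where "gap = (1 / n) * (\<Sum>k\<in>A. f (x k) - f wstar)"
  define dist where "dist = (1 / n) * (\<Sum>k\<in>A. (norm (x k - wstar))\<^sup>2)"
  define V where "V = (1 / n) * (\<Sum>k\<in>A. (norm (xbar - x k))\<^sup>2)"
  have cross: "- 2 * (u \<bullet> gbar) \<le> 2 * \<beta> * V - gap - \<mu> * dist"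
    unfolding u_def gbar_def V_def gap_def dist_def n_def by (rule mean_neg_inner_grad_le[OF smooth sconv min \<beta>])
  have grad: "(norm gbar)\<^sup>2 \<le> 2 * \<beta> * gap"
    unfolding gbar_def gap_def n_def by (rule norm_mean_grad_squared_le[OF smooth \<beta> min])
  have "u = (1 / n) *\<^sub>R (\<Sum>k\<in>A. x k - wstar)"
    using n by (simp add: u_def xbar_def sum_subtractf n_def scaleR_diff_right sum_constant_scaleR del: sum_constant)
  with norm_mean_squared_le[where v="\<lambda>k. x k - wstar" and A=A]
  have dist: "(norm u)\<^sup>2 \<le> dist"
    by (simp add: dist_def n_def)
  have "f xbar \<le> (\<Sum>k\<in>A. (1 / n) * f (x k))"
    unfolding xbar_def scaleR_sum_right using A n
    by (intro convex_on_sum[OF _ _ strongly_convex_imp_convex_on[OF sconv]]) (simp_all add: n_def)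
  then have jensen: "f xbar - f wstar \<le> gap"
    using n by (simp add: gap_def sum_subtractf sum_divide_distrib[symmetric] n_def diff_divide_distrib)
  have "0 \<le> gap"
    using n min by (simp add: gap_def sum_nonneg)
  moreover have "2 * \<beta> * \<eta> \<le> 1 / 2"
    using \<eta> \<beta> by (simp add: field_simps)
  ultimately have "(2 * \<beta> * \<eta>) * (\<eta> * gap) \<le> 1 / 2 * (\<eta> * gap)"
    using \<eta> by (intro mult_right_mono) simp_all
  then have second_order: "\<eta>\<^sup>2 * (2 * \<beta> * gap) \<le> \<eta> / 2 * gap"
    by (simp add: power2_eq_square mult_ac)
  have "(norm (u - \<eta> *\<^sub>R gbar))\<^sup>2 + \<eta> / 2 * (f xbar - f wstar)
      = (norm u)\<^sup>2 + \<eta> * (- 2 * (u \<bullet> gbar)) + \<eta>\<^sup>2 * (norm gbar)\<^sup>2 + \<eta> / 2 * (f xbar - f wstar)"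
    unfolding power2_norm_eq_inner
    by (simp add: inner_diff_left inner_diff_right inner_commute algebra_simps power2_eq_square)
  also have "\<dots> \<le> (norm u)\<^sup>2 + \<eta> * (2 * \<beta> * V - gap - \<mu> * dist) + \<eta>\<^sup>2 * (2 * \<beta> * gap) + \<eta> / 2 * gap"
    using cross grad jensen \<eta> by (intro add_mono mult_left_mono) simp_all
  also have "\<dots> \<le> (norm u)\<^sup>2 + \<eta> * (2 * \<beta> * V - gap - \<mu> * (norm u)\<^sup>2) + \<eta> / 2 * gap + \<eta> / 2 * gap"
  proof -
    have "\<eta> * (\<mu> * (norm u)\<^sup>2) \<le> \<eta> * (\<mu> * dist)"
      using dist \<eta> \<mu> by simp
    then show ?thesis
      using second_order by (simp add: right_diff_distrib)
  qed
  also have "\<dots> = (1 - \<mu> * \<eta>) * (norm u)\<^sup>2 + 2 * \<beta> * \<eta> * V"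
    by (simp add: algebra_simps)
  finally show ?thesis
    by (simp add: u_def V_def)
qed

section \<open>The partial-synchronisation iterates\<close>

lemma sum_psgd_Suc:
  assumes "K \<ge> 1"
  shows "(\<Sum>k=1..K. psgd w0 g xi eta H layer Hl K (Suc r) k)
       = (\<Sum>k=1..K. psgd w0 g xi eta H layer Hl K r k)
         - eta r *\<^sub>R (\<Sum>k=1..K. g (psgd w0 g xi eta H layer Hl K r k) (xi r k))"
proof (rule vec_eq_iff[THEN iffD2], rule allI)
  fix i
  let ?w = "psgd w0 g xi eta H layer Hl K"
  show "(\<Sum>k=1..K. ?w (Suc r) k) $ i = ((\<Sum>k=1..K. ?w r k) - eta r *\<^sub>R (\<Sum>k=1..K. g (?w r k) (xi r k))) $ i"
  proof (cases "Suc r mod H = Hl (layer i) mod H")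
    case True
    then have "(\<Sum>k=1..K. ?w (Suc r) k) $ i
        = (\<Sum>k=1..K. (\<Sum>j=1..K. ?w r j $ i - eta r * g (?w r j) (xi r j) $ i) / real K)"
      unfolding sum_component by (auto intro!: sum.cong)
    also have "\<dots> = (\<Sum>j=1..K. ?w r j $ i - eta r * g (?w r j) (xi r j) $ i)"
      using assms by simp
    finally show ?thesis by (simp add: sum_subtractf sum_distrib_left)
  next
    case False
    then show ?thesis by (simp add: sum_subtractf sum_distrib_left)
  qed
qed

lemma psgd_cong_noise:
  assumes "\<And>r j. r < t \<Longrightarrow> j \<in> {1..K} \<Longrightarrow> xi r j = xi' r j" and "k \<in> {1..K}"
  shows "psgd w0 g xi eta H layer Hl K t k = psgd w0 g xi' eta H layer Hl K t k"
  using assms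
proof (induction t arbitrary: k)
  case (Suc t)
  then have same: "\<forall>j\<in>{1..K}. psgd w0 g xi eta H layer Hl K t j = psgd w0 g xi' eta H layer Hl K t j
      \<and> xi t j = xi' t j"
    by auto
  then have "(\<Sum>j=1..K. psgd w0 g xi eta H layer Hl K t j $ i - eta t * g (psgd w0 g xi eta H layer Hl K t j) (xi t j) $ i)
      = (\<Sum>j=1..K. psgd w0 g xi' eta H layer Hl K t j $ i - eta t * g (psgd w0 g xi' eta H layer Hl K t j) (xi' t j) $ i)"
    for i by (intro sum.cong) auto
  with same Suc.prems(2) show ?case
    by (simp only: psgd.simps)
qed simp

lemma borel_measurable_vecI:
  fixes F :: "'a \<Rightarrow> real^'d"
  assumes "\<And>i. (\<lambda>x. F x $ i) \<in> borel_measurable M"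
  shows "F \<in> borel_measurable M"
proof (subst borel_measurable_euclidean_space, intro ballI)
  fix b :: "real^'d" assume "b \<in> Basis"
  then obtain i where "b = axis i 1" by (auto simp: Basis_vec_def)
  with assms[of i] show "(\<lambda>x. F x \<bullet> b) \<in> borel_measurable M"
    by (simp add: inner_axis)
qed

lemma psgd_measurable:
  fixes g :: "real^'d \<Rightarrow> 'b \<Rightarrow> real^'d" and xi :: "nat \<Rightarrow> nat \<Rightarrow> 'a \<Rightarrow> 'b"
  assumes g: "(\<lambda>(v, x). g v x) \<in> borel_measurable (borel \<Otimes>\<^sub>M N)"
    and xi: "\<And>r j. r < t \<Longrightarrow> j \<in> {1..K} \<Longrightarrow> xi r j \<in> measurable M N" and "k \<in> {1..K}"
  shows "(\<lambda>\<omega>. psgd w0 g (\<lambda>r j. xi r j \<omega>) eta H layer Hl K t k) \<in> borel_measurable M"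
  using xi \<open>k \<in> {1..K}\<close>
proof (induction t arbitrary: k)
  case (Suc t)
  let ?w = "\<lambda>j \<omega>. psgd w0 g (\<lambda>r j. xi r j \<omega>) eta H layer Hl K t j"
  have w: "?w j \<in> borel_measurable M" if "j \<in> {1..K}" for j
    using Suc.IH Suc.prems(1) that by auto
  have gw: "(\<lambda>\<omega>. g (?w j \<omega>) (xi t j \<omega>)) \<in> borel_measurable M" if "j \<in> {1..K}" for j
    using Suc.prems(1) that by (intro measurable_Pair_compose_split[OF g w[OF that]]) auto
  show ?case
  proof (rule borel_measurable_vecI)
    fix i
    have "(\<lambda>\<omega>. (\<Sum>j=1..K. ?w j \<omega> $ i - eta t * g (?w j \<omega>) (xi t j \<omega>) $ i) / real K) \<in> borel_measurable M"
      using w gw by (intro borel_measurable_divide borel_measurable_sum borel_measurable_diff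
          borel_measurable_times borel_measurable_const measurable_compose[OF _ borel_measurable_nth]) auto
    moreover have "(\<lambda>\<omega>. ?w k \<omega> $ i - eta t * g (?w k \<omega>) (xi t k \<omega>) $ i) \<in> borel_measurable M"
      using w[OF Suc.prems(2)] gw[OF Suc.prems(2)] by (intro borel_measurable_diff
          borel_measurable_times borel_measurable_const measurable_compose[OF _ borel_measurable_nth])
    ultimately show "(\<lambda>\<omega>. psgd w0 g (\<lambda>r j. xi r j \<omega>) eta H layer Hl K (Suc t) k $ i) \<in> borel_measurable M"
      by (cases "Suc t mod H = Hl (layer i) mod H") (simp_all only: psgd.simps vec_lambda_beta if_True if_False simp_thms)
  qed
qed simp

lemma last_sync_before:
  fixes t H c :: nat
  assumes "H > 0"
  obtains \<tau> where "\<tau> \<le> t" "t < \<tau> + H" "\<tau> = 0 \<or> \<tau> mod H = c mod H"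
    "\<And>s. \<tau> \<le> s \<Longrightarrow> s < t \<Longrightarrow> Suc s mod H \<noteq> c mod H"
proof (cases "t < c mod H")
  case True
  moreover have "c mod H < H" using assms by simp
  ultimately show ?thesis
    by (intro that[of 0]) auto
next
  case False
  define \<tau> where "\<tau> = c mod H + H * ((t - c mod H) div H)"
  have "H * ((t - c mod H) div H) = (t - c mod H) - (t - c mod H) mod H"
    by (simp add: minus_mod_eq_mult_div)
  moreover have "(t - c mod H) mod H \<le> t - c mod H"
    by simp
  ultimately have \<tau>: "\<tau> = t - (t - c mod H) mod H"
    using False unfolding \<tau>_def by linarith
  have "(t - c mod H) mod H < H" using assms by simp
  then have "\<tau> \<le> t" "t < \<tau> + H"
    using \<tau> by (simp_all add: le_diff_conv2)
  moreover have "Suc s mod H \<noteq> c mod H" if "\<tau> \<le> s" "s < t" for s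
  proof
    assume "Suc s mod H = c mod H"
    then have "Suc s mod H = \<tau> mod H" by (simp add: \<tau>_def)
    with \<open>\<tau> \<le> s\<close> have "H dvd Suc s - \<tau>"
      by (simp add: mod_eq_dvd_iff_nat)
    then have "H \<le> Suc s - \<tau>"
      using \<open>\<tau> \<le> s\<close> by (intro dvd_imp_le) auto
    with that \<open>t < \<tau> + H\<close> show False by simp
  qed
  ultimately show ?thesis
    by (intro that[of \<tau>]) (simp_all add: \<tau>_def)
qed

lemma psgd_component_without_sync:
  assumes "\<And>s. \<tau> \<le> s \<Longrightarrow> s < \<tau> + d \<Longrightarrow> Suc s mod H \<noteq> Hl (layer i) mod H"
  shows "psgd w0 g xi eta H layer Hl K (\<tau> + d) k $ i = psgd w0 g xi eta H layer Hl K \<tau> k $ i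
     - (\<Sum>s=\<tau>..<\<tau> + d. eta s * g (psgd w0 g xi eta H layer Hl K s k) (xi s k) $ i)"
  using assms by (induction d) auto

lemma psgd_component_synced:
  assumes "\<tau> = 0 \<or> \<tau> mod H = Hl (layer i) mod H"
  shows "psgd w0 g xi eta H layer Hl K \<tau> k $ i = psgd w0 g xi eta H layer Hl K \<tau> j $ i"
  using assms by (cases \<tau>) auto

lemma sum_squared_deviation_le:
  fixes a :: "'k \<Rightarrow> real"
  assumes "finite A"
  shows "(\<Sum>k\<in>A. (a k - (\<Sum>j\<in>A. a j) / real (card A))\<^sup>2) \<le> (\<Sum>k\<in>A. (a k)\<^sup>2)"
proof (cases "A = {}")
  case False
  define n where "n = real (card A)"
  define m where "m = (\<Sum>j\<in>A. a j) / n"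
  have "n > 0" using False assms by (simp add: n_def card_gt_0_iff)
  have "(\<Sum>k\<in>A. (a k - m)\<^sup>2) = (\<Sum>k\<in>A. (a k)\<^sup>2 - 2 * m * a k + m\<^sup>2)"
    by (simp add: power2_diff algebra_simps)
  also have "\<dots> = (\<Sum>k\<in>A. (a k)\<^sup>2) - 2 * m * (\<Sum>k\<in>A. a k) + n * m\<^sup>2"
    by (simp add: sum_subtractf sum.distrib sum_distrib_left n_def)
  also have "\<dots> = (\<Sum>k\<in>A. (a k)\<^sup>2) - n * m\<^sup>2"
    using \<open>n > 0\<close> by (simp add: m_def power2_eq_square)
  finally show ?thesis
    using \<open>n > 0\<close> by (simp add: m_def n_def)
qed simp

lemma psgd_component_deviation_le:
  fixes w0 :: "real^'d" and g :: "real^'d \<Rightarrow> 'b \<Rightarrow> real^'d" and xi :: "nat \<Rightarrow> nat \<Rightarrow> 'b"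
    and eta :: "nat \<Rightarrow> real" and layer :: "'d \<Rightarrow> nat" and Hl :: "nat \<Rightarrow> nat"
  assumes "H > 0" and "K \<ge> 1"
  defines "w \<equiv> psgd w0 g xi eta H layer Hl K"
  shows "(\<Sum>k=1..K. (((1 / real K) *\<^sub>R (\<Sum>j=1..K. w t j) - w t k) $ i)\<^sup>2)
     \<le> real H * (\<Sum>s\<in>{s. s < t \<and> t < s + H}. (eta s)\<^sup>2 * (\<Sum>k=1..K. (g (w s k) (xi s k) $ i)\<^sup>2))"
proof -
  define W where "W = {s. s < t \<and> t < s + H}"
  obtain \<tau> where \<tau>: "\<tau> \<le> t" "t < \<tau> + H" "\<tau> = 0 \<or> \<tau> mod H = Hl (layer i) mod H"
    "\<And>s. \<tau> \<le> s \<Longrightarrow> s < t \<Longrightarrow> Suc s mod H \<noteq> Hl (layer i) mod H"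
    using last_sync_before[OF \<open>H > 0\<close>] by metis
  define drift where "drift k = (\<Sum>s=\<tau>..<t. eta s * g (w s k) (xi s k) $ i)" for k
  have t: "\<tau> + (t - \<tau>) = t" using \<tau>(1) by simp
  have w_t: "w t k $ i = w \<tau> 1 $ i - drift k" for k
  proof -
    have "w (\<tau> + (t - \<tau>)) k $ i = w \<tau> k $ i - (\<Sum>s=\<tau>..<\<tau> + (t - \<tau>). eta s * g (w s k) (xi s k) $ i)"
      unfolding w_def by (rule psgd_component_without_sync) (use \<tau>(4) t in auto)
    moreover have "w \<tau> k $ i = w \<tau> 1 $ i"
      unfolding w_def by (rule psgd_component_synced[where layer=layer and Hl=Hl, OF \<tau>(3)])
    ultimately show ?thesis
      by (simp add: t drift_def)
  qed
  have "((1 / real K) *\<^sub>R (\<Sum>j=1..K. w t j)) $ i = w \<tau> 1 $ i - (\<Sum>j=1..K. drift j) / real K"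
    using \<open>K \<ge> 1\<close> by (simp add: w_t sum_subtractf field_simps)
  then have "(\<Sum>k=1..K. (((1 / real K) *\<^sub>R (\<Sum>j=1..K. w t j) - w t k) $ i)\<^sup>2)
      = (\<Sum>k=1..K. (drift k - (\<Sum>j=1..K. drift j) / real (card {1..K}))\<^sup>2)"
    by (simp add: w_t power2_commute)
  also have "\<dots> \<le> (\<Sum>k=1..K. (drift k)\<^sup>2)"
    by (rule sum_squared_deviation_le) simp
  also have "\<dots> \<le> (\<Sum>k=1..K. real H * (\<Sum>s\<in>W. (eta s)\<^sup>2 * (g (w s k) (xi s k) $ i)\<^sup>2))"
  proof (rule sum_mono)
    fix k
    have "(drift k)\<^sup>2 \<le> (\<Sum>s=\<tau>..<t. (eta s * g (w s k) (xi s k) $ i)\<^sup>2) * card {\<tau>..<t}"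
      unfolding drift_def by (rule sum_squared_le_sum_of_squares)
    also have "\<dots> \<le> (\<Sum>s\<in>W. (eta s * g (w s k) (xi s k) $ i)\<^sup>2) * real H"
      using \<tau>(2) by (intro mult_mono sum_mono2) (auto simp: W_def sum_nonneg)
    finally show "(drift k)\<^sup>2 \<le> real H * (\<Sum>s\<in>W. (eta s)\<^sup>2 * (g (w s k) (xi s k) $ i)\<^sup>2)"
      by (simp add: power_mult_distrib mult.commute)
  qed
  also have "\<dots> = real H * (\<Sum>s\<in>W. (eta s)\<^sup>2 * (\<Sum>k=1..K. (g (w s k) (xi s k) $ i)\<^sup>2))"
    by (simp add: sum_distrib_left[symmetric] sum.swap[of _ W])
  finally show ?thesis
    by (simp only: W_def)
qed

lemma psgd_deviation_le:
  fixes w0 :: "real^'d" and g :: "real^'d \<Rightarrow> 'b \<Rightarrow> real^'d" and xi :: "nat \<Rightarrow> nat \<Rightarrow> 'b"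
    and eta :: "nat \<Rightarrow> real" and layer :: "'d \<Rightarrow> nat" and Hl :: "nat \<Rightarrow> nat"
  assumes "H > 0" and "K \<ge> 1"
  defines "w \<equiv> psgd w0 g xi eta H layer Hl K"
  shows "(\<Sum>k=1..K. (norm ((1 / real K) *\<^sub>R (\<Sum>j=1..K. w t j) - w t k))\<^sup>2)
     \<le> real H * (\<Sum>s\<in>{s. s < t \<and> t < s + H}. (eta s)\<^sup>2 * (\<Sum>k=1..K. (norm (g (w s k) (xi s k)))\<^sup>2))"
proof -
  have norm_sq: "(norm v)\<^sup>2 = (\<Sum>i\<in>UNIV. (v $ i)\<^sup>2)" for v :: "real^'d"
    unfolding power2_norm_eq_inner by (simp add: inner_vec_def power2_eq_square)
  have "(\<Sum>k=1..K. (norm ((1 / real K) *\<^sub>R (\<Sum>j=1..K. w t j) - w t k))\<^sup>2)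
      = (\<Sum>i\<in>UNIV. \<Sum>k=1..K. (((1 / real K) *\<^sub>R (\<Sum>j=1..K. w t j) - w t k) $ i)\<^sup>2)"
    by (simp only: norm_sq sum.swap[of _ UNIV])
  also have "\<dots> \<le> (\<Sum>i\<in>UNIV. real H * (\<Sum>s\<in>{s. s < t \<and> t < s + H}. (eta s)\<^sup>2 * (\<Sum>k=1..K. (g (w s k) (xi s k) $ i)\<^sup>2)))"
    unfolding w_def using assms by (intro sum_mono psgd_component_deviation_le)
  also have "\<dots> = real H * (\<Sum>s\<in>{s. s < t \<and> t < s + H}. (eta s)\<^sup>2 * (\<Sum>k=1..K. (norm (g (w s k) (xi s k)))\<^sup>2))"
    by (simp add: norm_sq sum_distrib_left sum.swap[of _ UNIV])
  finally show ?thesis .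
qed

section \<open>Centred noise and independent rounds\<close>

lemma (in prob_space) nn_integral_norm_add_centered_squared:
  fixes D :: "'a \<Rightarrow> 'b::euclidean_space"
  assumes D: "integrable M D" "(\<integral>y. D y \<partial>M) = 0"
    and finite: "(\<integral>\<^sup>+y. ennreal ((norm (D y))\<^sup>2) \<partial>M) < \<infinity>"
  shows "(\<integral>\<^sup>+y. ennreal ((norm (s + c *\<^sub>R D y))\<^sup>2) \<partial>M)
       = ennreal ((norm s)\<^sup>2) + ennreal (c\<^sup>2) * (\<integral>\<^sup>+y. ennreal ((norm (D y))\<^sup>2) \<partial>M)"
proof -
  have D_meas: "D \<in> borel_measurable M"
    using D(1) by (rule borel_measurable_integrable)
  have D2: "integrable M (\<lambda>y. (norm (D y))\<^sup>2)"
    using finite D_meas by (simp add: integrable_iff_bounded)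
  have expand: "(norm (s + c *\<^sub>R D y))\<^sup>2 = (norm s)\<^sup>2 + 2 * c * (s \<bullet> D y) + c\<^sup>2 * (norm (D y))\<^sup>2" for y
    unfolding power2_norm_eq_inner
    by (simp add: inner_add_left inner_add_right algebra_simps power2_eq_square inner_commute)
  have "integrable M (\<lambda>y. (norm (s + c *\<^sub>R D y))\<^sup>2)"
    unfolding expand using D D2 by (intro Bochner_Integration.integrable_add integrable_mult_right
        integrable_inner_right integrable_const)
  then have "(\<integral>\<^sup>+y. ennreal ((norm (s + c *\<^sub>R D y))\<^sup>2) \<partial>M) = ennreal (\<integral>y. (norm (s + c *\<^sub>R D y))\<^sup>2 \<partial>M)"
    by (rule nn_integral_eq_integral) simp
  also have "(\<integral>y. (norm (s + c *\<^sub>R D y))\<^sup>2 \<partial>M) = (norm s)\<^sup>2 + c\<^sup>2 * (\<integral>y. (norm (D y))\<^sup>2 \<partial>M)"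
    using D D2 by (simp add: expand integral_inner_right prob_space)
  also have "\<dots> = ennreal ((norm s)\<^sup>2) + ennreal (c\<^sup>2) * (\<integral>\<^sup>+y. ennreal ((norm (D y))\<^sup>2) \<partial>M)"
    using D2 by (simp add: nn_integral_eq_integral ennreal_plus ennreal_mult integral_nonneg_AE)
  finally show ?thesis .
qed

lemma nn_integral_PiM_norm_add_sum_centered_squared:
  fixes D :: "'i \<Rightarrow> 'b \<Rightarrow> 'c::euclidean_space"
  assumes Q: "\<And>i. prob_space (Q i)" and "finite A"
    and D: "\<And>i. i \<in> A \<Longrightarrow> integrable (Q i) (D i)" "\<And>i. i \<in> A \<Longrightarrow> (\<integral>y. D i y \<partial>Q i) = 0"
      "\<And>i. i \<in> A \<Longrightarrow> (\<integral>\<^sup>+y. ennreal ((norm (D i y))\<^sup>2) \<partial>Q i) < \<infinity>"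
  shows "(\<integral>\<^sup>+x. ennreal ((norm (B + c *\<^sub>R (\<Sum>i\<in>A. D i (x i))))\<^sup>2) \<partial>PiM A Q)
       = ennreal ((norm B)\<^sup>2) + ennreal (c\<^sup>2) * (\<Sum>i\<in>A. \<integral>\<^sup>+y. ennreal ((norm (D i y))\<^sup>2) \<partial>Q i)"
  using \<open>finite A\<close> D
proof (induction A arbitrary: B rule: finite_induct)
  case empty
  interpret prob_space "PiM {} Q" by (rule prob_space_PiM) (rule Q)
  show ?case by (simp add: emeasure_space_1)
next
  case (insert a A)
  interpret product_sigma_finite Q
    by (simp add: product_sigma_finite_def Q prob_space_imp_sigma_finite)
  interpret PA: prob_space "PiM A Q" by (rule prob_space_PiM) (rule Q)
  interpret Qa: prob_space "Q a" by (rule Q)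
  have meas: "(\<lambda>x. ennreal ((norm (B' + c *\<^sub>R (\<Sum>i\<in>I. D i (x i))))\<^sup>2)) \<in> borel_measurable (PiM I Q)"
    if "I \<subseteq> insert a A" for I B'
  proof -
    have "(\<lambda>x. D i (x i)) \<in> borel_measurable (PiM I Q)" if "i \<in> I" for i
      using insert.prems(1) \<open>I \<subseteq> insert a A\<close> that
      by (intro measurable_compose[OF measurable_component_singleton borel_measurable_integrable]) auto
    then have "(\<lambda>x. \<Sum>i\<in>I. D i (x i)) \<in> borel_measurable (PiM I Q)"
      by (rule borel_measurable_sum)
    then show ?thesis by measurable
  qed
  define S where "S x = B + c *\<^sub>R (\<Sum>i\<in>A. D i (x i))" for x
  have "(\<integral>\<^sup>+x. ennreal ((norm (B + c *\<^sub>R (\<Sum>i\<in>insert a A. D i (x i))))\<^sup>2) \<partial>PiM (insert a A) Q)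
      = (\<integral>\<^sup>+x. (\<integral>\<^sup>+y. ennreal ((norm (S x + c *\<^sub>R D a y))\<^sup>2) \<partial>Q a) \<partial>PiM A Q)"
  proof (subst product_nn_integral_insert[OF insert.hyps(1,2)])
    show "(\<lambda>x. ennreal ((norm (B + c *\<^sub>R (\<Sum>i\<in>insert a A. D i (x i))))\<^sup>2)) \<in> borel_measurable (PiM (insert a A) Q)"
      by (rule meas) simp
    have "(\<Sum>i\<in>A. D i ((x(a := y)) i)) = (\<Sum>i\<in>A. D i (x i))" for x y
      using insert.hyps by (intro sum.cong) auto
    then show "(\<integral>\<^sup>+x. \<integral>\<^sup>+y. ennreal ((norm (B + c *\<^sub>R (\<Sum>i\<in>insert a A. D i ((x(a := y)) i))))\<^sup>2) \<partial>Q a \<partial>PiM A Q)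
        = (\<integral>\<^sup>+x. (\<integral>\<^sup>+y. ennreal ((norm (S x + c *\<^sub>R D a y))\<^sup>2) \<partial>Q a) \<partial>PiM A Q)"
      using insert.hyps by (simp add: S_def algebra_simps)
  qed
  also have "\<dots> = (\<integral>\<^sup>+x. ennreal ((norm (S x))\<^sup>2) + ennreal (c\<^sup>2) * (\<integral>\<^sup>+y. ennreal ((norm (D a y))\<^sup>2) \<partial>Q a) \<partial>PiM A Q)"
    using insert.prems by (intro nn_integral_cong Qa.nn_integral_norm_add_centered_squared) auto
  also have "\<dots> = (\<integral>\<^sup>+x. ennreal ((norm (S x))\<^sup>2) \<partial>PiM A Q) + ennreal (c\<^sup>2) * (\<integral>\<^sup>+y. ennreal ((norm (D a y))\<^sup>2) \<partial>Q a)"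
    using meas[of A B] by (subst nn_integral_add) (auto simp: S_def PA.emeasure_space_1)
  also have "(\<integral>\<^sup>+x. ennreal ((norm (S x))\<^sup>2) \<partial>PiM A Q)
      = ennreal ((norm B)\<^sup>2) + ennreal (c\<^sup>2) * (\<Sum>i\<in>A. \<integral>\<^sup>+y. ennreal ((norm (D i y))\<^sup>2) \<partial>Q i)"
    unfolding S_def using insert.prems by (intro insert.IH) auto
  finally show ?case
    using insert.hyps by (simp add: distrib_left add.assoc add.commute)
qed

lemma nn_integral_PiM_component:
  assumes "\<And>i. i \<in> I \<Longrightarrow> prob_space (Q i)" and "i \<in> I" and "\<phi> \<in> borel_measurable (Q i)"
  shows "(\<integral>\<^sup>+x. \<phi> (x i) \<partial>PiM I Q) = (\<integral>\<^sup>+z. \<phi> z \<partial>Q i)"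
proof -
  have "(\<integral>\<^sup>+x. \<phi> (x i) \<partial>PiM I Q) = (\<integral>\<^sup>+z. \<phi> z \<partial>distr (PiM I Q) (Q i) (\<lambda>x. x i))"
    using assms by (intro nn_integral_distr[symmetric]) auto
  also have "distr (PiM I Q) (Q i) (\<lambda>x. x i) = Q i"
    using assms by (intro distr_PiM_component) auto
  finally show ?thesis .
qed

lemma (in prob_space) distr_restrict_eq_PiM:
  assumes indep: "indep_vars (\<lambda>_. N) X I" and "L \<subseteq> I" "L \<noteq> {}"
    and Q: "\<And>i. i \<in> I \<Longrightarrow> Q i = distr M N (X i)"
  shows "distr M (PiM L (\<lambda>_. N)) (\<lambda>\<omega>. \<lambda>i\<in>L. X i \<omega>) = PiM L Q"
proof -
  have "distr M (PiM L (\<lambda>_. N)) (\<lambda>\<omega>. \<lambda>i\<in>L. X i \<omega>) = PiM L (\<lambda>i. distr M N (X i))"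
    using indep_vars_subset[OF indep \<open>L \<subseteq> I\<close>] assms
    by (subst (asm) indep_vars_iff_distr_eq_PiM') (auto simp: indep_vars_def)
  also have "\<dots> = PiM L Q"
    using assms by (intro PiM_cong) auto
  finally show ?thesis .
qed

lemma (in prob_space) indep_vars_nn_integral_split:
  fixes X :: "'i \<Rightarrow> 'a \<Rightarrow> 'b" and h :: "('i \<Rightarrow> 'b) \<Rightarrow> ('i \<Rightarrow> 'b) \<Rightarrow> ennreal"
  assumes indep: "indep_vars (\<lambda>_. N) X I"
    and "J \<subseteq> I" "T \<subseteq> I" "J \<inter> T = {}" "finite J" "finite T" "T \<noteq> {}"
    and Q: "\<And>i. prob_space (Q i)" "\<And>i. i \<in> I \<Longrightarrow> Q i = distr M N (X i)"
    and h: "case_prod h \<in> borel_measurable (PiM J (\<lambda>_. N) \<Otimes>\<^sub>M PiM T (\<lambda>_. N))"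
  shows "(\<integral>\<^sup>+\<omega>. h (\<lambda>i\<in>J. X i \<omega>) (\<lambda>i\<in>T. X i \<omega>) \<partial>M)
       = (\<integral>\<^sup>+\<omega>. (\<integral>\<^sup>+x. h (\<lambda>i\<in>J. X i \<omega>) x \<partial>PiM T Q) \<partial>M)"
proof -
  interpret product_sigma_finite Q
    by (simp add: product_sigma_finite_def Q prob_space_imp_sigma_finite)
  interpret PT: sigma_finite_measure "PiM T Q"
    using Q by (intro prob_space_imp_sigma_finite prob_space_PiM) auto
  have X: "random_variable N (X i)" if "i \<in> I" for i
    using indep that by (auto simp: indep_vars_def)
  have sets_PiM_Q: "sets (PiM L Q) = sets (PiM L (\<lambda>_. N))" if "L \<subseteq> I" for L
    using that Q by (intro sets_PiM_cong) auto
  note distr_restrict = distr_restrict_eq_PiM[OF indep _ _ Q(2)]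
  define F where "F z = h (restrict z J) (restrict z T)" for z
  have F: "F \<in> borel_measurable (PiM (J \<union> T) (\<lambda>_. N))"
    unfolding F_def
    by (rule measurable_Pair_compose_split[OF h measurable_restrict_subset measurable_restrict_subset]) auto
  have "(\<integral>\<^sup>+\<omega>. h (\<lambda>i\<in>J. X i \<omega>) (\<lambda>i\<in>T. X i \<omega>) \<partial>M) = (\<integral>\<^sup>+\<omega>. F (\<lambda>i\<in>J \<union> T. X i \<omega>) \<partial>M)"
    by (simp add: F_def Int_absorb1)
  also have "\<dots> = (\<integral>\<^sup>+z. F z \<partial>distr M (PiM (J \<union> T) (\<lambda>_. N)) (\<lambda>\<omega>. \<lambda>i\<in>J \<union> T. X i \<omega>))"
    using X \<open>J \<subseteq> I\<close> \<open>T \<subseteq> I\<close> F by (intro nn_integral_distr[symmetric] measurable_restrict) auto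
  also have "\<dots> = (\<integral>\<^sup>+z. F z \<partial>PiM (J \<union> T) Q)"
    using \<open>J \<subseteq> I\<close> \<open>T \<subseteq> I\<close> \<open>T \<noteq> {}\<close> by (simp add: distr_restrict)
  also have "\<dots> = (\<integral>\<^sup>+y. (\<integral>\<^sup>+x. F (merge J T (y, x)) \<partial>PiM T Q) \<partial>PiM J Q)"
    using F \<open>J \<subseteq> I\<close> \<open>T \<subseteq> I\<close> \<open>J \<inter> T = {}\<close> \<open>finite J\<close> \<open>finite T\<close>
    by (intro product_nn_integral_fold) (auto simp: measurable_cong_sets[OF sets_PiM_Q refl])
  also have "\<dots> = (\<integral>\<^sup>+y. (\<integral>\<^sup>+x. h y x \<partial>PiM T Q) \<partial>PiM J Q)"
  proof (intro nn_integral_cong)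
    fix y x assume "y \<in> space (PiM J Q)" "x \<in> space (PiM T Q)"
    with \<open>J \<inter> T = {}\<close> have "restrict (merge J T (y, x)) J = y" "restrict (merge J T (y, x)) T = x"
      by (auto simp: space_PiM PiE_def extensional_def restrict_def fun_eq_iff merge_def)
    then show "F (merge J T (y, x)) = h y x"
      by (simp add: F_def)
  qed
  also have "\<dots> = (\<integral>\<^sup>+\<omega>. (\<integral>\<^sup>+x. h (\<lambda>i\<in>J. X i \<omega>) x \<partial>PiM T Q) \<partial>M)"
  proof (cases "J = {}")
    case True
    then show ?thesis
      by (simp add: PiM_empty emeasure_space_1 nn_integral_count_space_finite restrict_def)
  next
    case False
    have "case_prod h \<in> borel_measurable (PiM J (\<lambda>_. N) \<Otimes>\<^sub>M PiM T Q)"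
      using h measurable_cong_sets[OF sets_pair_measure_cong[OF refl sets_PiM_Q[OF \<open>T \<subseteq> I\<close>]] refl]
      by metis
    then have "(\<lambda>y. \<integral>\<^sup>+x. h y x \<partial>PiM T Q) \<in> borel_measurable (PiM J (\<lambda>_. N))"
      by (rule PT.borel_measurable_nn_integral)
    with X \<open>J \<subseteq> I\<close> \<open>J \<noteq> {}\<close> show ?thesis
      by (subst distr_restrict[symmetric]) (auto intro!: nn_integral_distr measurable_restrict)
  qed
  finally show ?thesis .
qed

section \<open>Expected progress of the averaged iterate\<close>

lemma cubic_weight_times_stepsize:
  fixes m x :: real
  assumes "m > 0" "x > 0"
  shows "m * x ^ 3 / 4 * (4 / (m * x)) = x\<^sup>2"
  using assms by (simp add: power3_eq_cube power2_eq_square)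

lemma cubic_weight_contraction_le:
  fixes m x :: real
  assumes "m > 0" "x \<ge> 1"
  shows "m * x ^ 3 / 4 * (1 - m * (4 / (m * x))) \<le> m * (x - 1) ^ 3 / 4"
proof -
  have "m * x ^ 3 / 4 * (1 - m * (4 / (m * x))) = m * (x\<^sup>2 * (x - 4)) / 4"
    using assms by (simp add: power3_eq_cube power2_eq_square field_simps)
  moreover have "(x - 1) ^ 3 - x\<^sup>2 * (x - 4) = x\<^sup>2 + 3 * x - 1"
    by (simp add: power3_eq_cube power2_eq_square algebra_simps)
  moreover have "0 \<le> x\<^sup>2 + 3 * x - 1"
    using assms by (simp add: add_increasing)
  ultimately show ?thesis
    using assms by (simp add: mult_left_mono)
qed

lemma cubic_weight_times_step_error:
  fixes m x b s c h k :: real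
  assumes "m > 0" "x > 0"
  shows "m * x ^ 3 / 4 * ((4 / (m * x))\<^sup>2 * s / k + 8 * b * (4 / (m * x)) ^ 3 * c * h)
       = 4 * s / (m * k) * x + 128 * b * c * h / m\<^sup>2"
  using assms by (simp add: power3_eq_cube power2_eq_square field_simps)

lemma sum_shifted_le:
  fixes a :: real
  shows "(\<Sum>t<n. a + real t) \<le> real n * (real n + 2 * a) / 2"
  by (induction n) (simp_all add: algebra_simps)

locale partial_sync_local_sgd =
  fixes M :: "'o measure" and N :: "'b measure"
    and f :: "real^'d \<Rightarrow> real" and grad :: "real^'d \<Rightarrow> real^'d"
    and g :: "real^'d \<Rightarrow> 'b \<Rightarrow> real^'d"
    and \<xi> :: "nat \<Rightarrow> nat \<Rightarrow> 'o \<Rightarrow> 'b"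
    and w0 wstar :: "real^'d"
    and \<beta> \<mu> a \<sigma> G :: real
    and K R H :: nat
    and layer :: "'d \<Rightarrow> nat" and Hl :: "nat \<Rightarrow> nat"
  assumes M: "prob_space M"
    and smooth: "smooth_with_grad f grad \<beta>"
    and sconv: "strongly_convex f \<mu>"
    and minimizer: "\<forall>v. f wstar \<le> f v"
    and K: "K \<ge> 1" and R: "R \<ge> 1" and H: "H \<ge> 1"
    and a: "a > max (16 * (\<beta> / \<mu>)) (real H)"
    and g_meas: "(\<lambda>(v, x). g v x) \<in> borel_measurable (borel \<Otimes>\<^sub>M N)"
    and xi_meas: "\<forall>r k. \<xi> r k \<in> measurable M N"
    and xi_indep: "prob_space.indep_vars M (\<lambda>_. N) (\<lambda>(r, k). \<xi> r k) (UNIV \<times> {1..K})"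
    and unbiased: "\<forall>r k v. integrable (distr M N (\<xi> r k)) (g v)
                     \<and> (\<integral>x. g v x \<partial>distr M N (\<xi> r k)) = grad v"
    and variance: "\<forall>r<R. \<forall>k\<in>{1..K}. AE \<omega> in M.
        (\<integral>\<^sup>+x. ennreal ((norm (g (psgd w0 g (\<lambda>r k. \<xi> r k \<omega>) (\<lambda>r. 4 / (\<mu> * (a + real r))) H layer Hl K r k) x
          - grad (psgd w0 g (\<lambda>r k. \<xi> r k \<omega>) (\<lambda>r. 4 / (\<mu> * (a + real r))) H layer Hl K r k)))\<^sup>2)
          \<partial>distr M N (\<xi> r k)) \<le> ennreal (\<sigma>\<^sup>2)"
    and second_moment: "\<forall>r<R. \<forall>k\<in>{1..K}. AE \<omega> in M.
        (\<integral>\<^sup>+x. ennreal ((norm (g (psgd w0 g (\<lambda>r k. \<xi> r k \<omega>) (\<lambda>r. 4 / (\<mu> * (a + real r))) H layer Hl K r k) x))\<^sup>2)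
          \<partial>distr M N (\<xi> r k)) \<le> ennreal (G\<^sup>2)"
begin

(* The averaged iterate is advanced by sum_psgd_Suc; letting simp unfold a round of psgd would
   expose the per-layer synchronisation test in every goal about later rounds. *)
declare psgd.simps(2) [simp del]

abbreviation "\<eta> r \<equiv> 4 / (\<mu> * (a + real r))"
abbreviation "w r k \<omega> \<equiv> psgd w0 g (\<lambda>r k. \<xi> r k \<omega>) (\<lambda>r. \<eta> r) H layer Hl K r k"
abbreviation "w_avg r \<omega> \<equiv> (1 / real K) *\<^sub>R (\<Sum>k=1..K. w r k \<omega>)"
abbreviation "noise \<equiv> \<lambda>(r, k). \<xi> r k"

(* w_of reads the noise from a table indexed by (round, worker), which separates the past rounds
   from the current one; exact_step is the averaged update with the stochastic gradients replaced by
   the exact ones. *)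
abbreviation "w_of r k y \<equiv> psgd w0 g (\<lambda>r k. y (r, k)) (\<lambda>r. \<eta> r) H layer Hl K r k"
abbreviation "exact_step r \<omega> \<equiv> w_avg r \<omega> - wstar - \<eta> r *\<^sub>R ((1 / real K) *\<^sub>R (\<Sum>k=1..K. grad (w r k \<omega>)))"

lemma mu_pos: "\<mu> > 0"
  using sconv by (simp add: strongly_convex_def)

lemma beta_pos: "\<beta> > 0"
  using strong_convexity_le_smoothness[OF smooth sconv] mu_pos by simp

lemma a_ge_16: "a \<ge> 16"
proof -
  have "16 \<le> 16 * (\<beta> / \<mu>)"
    using strong_convexity_le_smoothness[OF smooth sconv] mu_pos by (simp add: field_simps)
  with a show ?thesis by simp
qed

lemma stepsize_bounds: "0 < \<eta> r" "\<eta> r \<le> 1 / (4 * \<beta>)" "\<mu> * \<eta> r \<le> 1"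
proof -
  show "0 < \<eta> r" using mu_pos a_ge_16 by simp
  have "16 * \<beta> \<le> \<mu> * (a + real r)"
    using a mu_pos by (simp add: field_simps add_increasing2)
  then show "\<eta> r \<le> 1 / (4 * \<beta>)"
    using mu_pos a_ge_16 beta_pos by (simp add: field_simps)
  show "\<mu> * \<eta> r \<le> 1"
    using mu_pos a_ge_16 by simp
qed

lemma stepsize_le_twice:
  assumes "s < t" "t < s + H"
  shows "\<eta> s \<le> 2 * \<eta> t"
proof -
  have "a + real t \<le> 2 * (a + real s)"
    using assms a by simp
  then have "\<mu> * (a + real t) \<le> 2 * (\<mu> * (a + real s))"
    using mu_pos by (simp add: mult_left_mono)
  then have "8 / (2 * (\<mu> * (a + real s))) \<le> 8 / (\<mu> * (a + real t))"
    using mu_pos a_ge_16 by (intro divide_left_mono) auto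
  then show ?thesis by simp
qed

lemma noise_distr_prob_space: "prob_space (distr M N (noise i))"
  using xi_meas by (cases i) (auto intro!: prob_space.prob_space_distr M)

lemma measurable_g_compose:
  assumes "F \<in> borel_measurable \<Omega>" "Y \<in> measurable \<Omega> N"
  shows "(\<lambda>\<omega>. g (F \<omega>) (Y \<omega>)) \<in> borel_measurable \<Omega>"
  by (rule measurable_Pair_compose_split[OF g_meas assms])

lemma iterate_measurable: "k \<in> {1..K} \<Longrightarrow> (\<lambda>\<omega>. w r k \<omega>) \<in> borel_measurable M"
  by (rule psgd_measurable[OF g_meas]) (use xi_meas in auto)

lemma w_avg_measurable: "(\<lambda>\<omega>. w_avg r \<omega>) \<in> borel_measurable M"
  using iterate_measurable by (intro borel_measurable_scaleR borel_measurable_const borel_measurable_sum) auto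

lemma grad_measurable[measurable]: "grad \<in> borel_measurable borel"
  by (rule borel_measurable_continuous_onI[OF smooth_continuous_on_grad[OF smooth]])

lemma f_measurable[measurable]: "f \<in> borel_measurable borel"
  by (rule borel_measurable_continuous_onI[OF smooth_continuous_on[OF smooth]])

lemma exact_step_measurable: "(\<lambda>\<omega>. exact_step r \<omega>) \<in> borel_measurable M"
proof -
  have "(\<lambda>\<omega>. \<Sum>k=1..K. grad (w r k \<omega>)) \<in> borel_measurable M"
    using iterate_measurable by (intro borel_measurable_sum) (auto intro: measurable_compose[OF _ grad_measurable])
  with w_avg_measurable show ?thesis by measurable
qed

lemma w_of_restrict_noise:
  assumes "k \<in> {1..K}" "{..<r} \<times> {1..K} \<subseteq> J"
  shows "w_of r k (\<lambda>i\<in>J. noise i \<omega>) = w r k \<omega>"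
  by (rule psgd_cong_noise) (use assms in \<open>auto simp: subset_iff\<close>)

lemma w_of_fst_measurable:
  assumes "k \<in> {1..K}" "{..<r} \<times> {1..K} \<subseteq> J"
  shows "(\<lambda>p. w_of r k (fst p)) \<in> borel_measurable (PiM J (\<lambda>_. N) \<Otimes>\<^sub>M PiM T (\<lambda>_. N))"
  using assms
  by (intro psgd_measurable[OF g_meas, where xi="\<lambda>r j p. fst p (r, j)"]
      measurable_compose[OF measurable_fst measurable_component_singleton]) auto

lemma snd_component_measurable:
  "i \<in> T \<Longrightarrow> (\<lambda>p. snd p i) \<in> measurable (PiM J (\<lambda>_. N) \<Otimes>\<^sub>M PiM T (\<lambda>_. N)) N"
  by (intro measurable_compose[OF measurable_snd measurable_component_singleton])

lemma nn_integral_split_round: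
  fixes h :: "(nat \<times> nat \<Rightarrow> 'b) \<Rightarrow> (nat \<times> nat \<Rightarrow> 'b) \<Rightarrow> ennreal"
  assumes "case_prod h \<in> borel_measurable (PiM ({..<s} \<times> {1..K}) (\<lambda>_. N) \<Otimes>\<^sub>M PiM ({s} \<times> {1..K}) (\<lambda>_. N))"
  shows "(\<integral>\<^sup>+\<omega>. h (\<lambda>i\<in>{..<s} \<times> {1..K}. noise i \<omega>) (\<lambda>i\<in>{s} \<times> {1..K}. noise i \<omega>) \<partial>M)
       = (\<integral>\<^sup>+\<omega>. (\<integral>\<^sup>+x. h (\<lambda>i\<in>{..<s} \<times> {1..K}. noise i \<omega>) x \<partial>PiM ({s} \<times> {1..K}) (\<lambda>i. distr M N (noise i))) \<partial>M)"
  using K by (intro prob_space.indep_vars_nn_integral_split[OF M xi_indep _ _ _ _ _ _ noise_distr_prob_space _ assms]) auto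

lemma nn_integral_iterate_noise:
  assumes \<phi>: "case_prod \<phi> \<in> borel_measurable (borel \<Otimes>\<^sub>M N)" and k: "k \<in> {1..K}"
  shows "(\<integral>\<^sup>+\<omega>. \<phi> (w s k \<omega>) (\<xi> s k \<omega>) \<partial>M) = (\<integral>\<^sup>+\<omega>. (\<integral>\<^sup>+z. \<phi> (w s k \<omega>) z \<partial>distr M N (\<xi> s k)) \<partial>M)"
proof -
  define J where "J = {..<s} \<times> {1..K}"
  define T where "T = {s} \<times> {1..K}"
  define h where "h y x = \<phi> (w_of s k y) (x (s, k))" for y x :: "nat \<times> nat \<Rightarrow> 'b"
  have sk: "(s, k) \<in> T" using k by (simp add: T_def)
  have past: "w_of s k (\<lambda>i\<in>J. noise i \<omega>) = w s k \<omega>" for \<omega>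
    using k by (intro w_of_restrict_noise) (auto simp: J_def)
  have "(\<lambda>i\<in>T. noise i \<omega>) (s, k) = \<xi> s k \<omega>" for \<omega>
    using sk by simp
  then have "(\<integral>\<^sup>+\<omega>. \<phi> (w s k \<omega>) (\<xi> s k \<omega>) \<partial>M) = (\<integral>\<^sup>+\<omega>. h (\<lambda>i\<in>J. noise i \<omega>) (\<lambda>i\<in>T. noise i \<omega>) \<partial>M)"
    by (simp only: h_def past)
  also have "\<dots> = (\<integral>\<^sup>+\<omega>. (\<integral>\<^sup>+x. h (\<lambda>i\<in>J. noise i \<omega>) x \<partial>PiM T (\<lambda>i. distr M N (noise i))) \<partial>M)"
  proof -
    have "case_prod h \<in> borel_measurable (PiM J (\<lambda>_. N) \<Otimes>\<^sub>M PiM T (\<lambda>_. N))"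
      unfolding h_def case_prod_beta'
      by (rule measurable_Pair_compose_split[OF \<phi> w_of_fst_measurable[OF k] snd_component_measurable[OF sk]])
        (simp add: J_def)
    then show ?thesis
      unfolding J_def T_def by (rule nn_integral_split_round)
  qed
  also have "\<dots> = (\<integral>\<^sup>+\<omega>. (\<integral>\<^sup>+z. \<phi> (w s k \<omega>) z \<partial>distr M N (\<xi> s k)) \<partial>M)"
    unfolding h_def past using sk noise_distr_prob_space
    by (intro nn_integral_cong, subst nn_integral_PiM_component)
      (auto intro!: measurable_Pair_compose_split[OF \<phi>])
  finally show ?thesis .
qed

lemma expected_norm_stoch_grad_squared_le:
  assumes "s < R" "k \<in> {1..K}"
  shows "(\<integral>\<^sup>+\<omega>. ennreal ((norm (g (w s k \<omega>) (\<xi> s k \<omega>)))\<^sup>2) \<partial>M) \<le> ennreal (G\<^sup>2)"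
proof -
  interpret prob_space M by (rule M)
  have "(\<integral>\<^sup>+\<omega>. ennreal ((norm (g (w s k \<omega>) (\<xi> s k \<omega>)))\<^sup>2) \<partial>M)
      = (\<integral>\<^sup>+\<omega>. (\<integral>\<^sup>+z. ennreal ((norm (g (w s k \<omega>) z))\<^sup>2) \<partial>distr M N (\<xi> s k)) \<partial>M)"
    using g_meas \<open>k \<in> {1..K}\<close> by (intro nn_integral_iterate_noise[where \<phi>="\<lambda>v z. ennreal ((norm (g v z))\<^sup>2)"])
      (simp_all add: case_prod_beta')
  also have "\<dots> \<le> (\<integral>\<^sup>+\<omega>. ennreal (G\<^sup>2) \<partial>M)"
    using second_moment assms by (intro nn_integral_mono_AE) auto
  finally show ?thesis
    by (simp add: emeasure_space_1)
qed

lemma stoch_grad_centered: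
  "integrable (distr M N (\<xi> r k)) (\<lambda>z. g v z - grad v)"
  "(\<integral>z. g v z - grad v \<partial>distr M N (\<xi> r k)) = 0"
proof -
  interpret prob_space "distr M N (\<xi> r k)"
    using noise_distr_prob_space[of "(r, k)"] by simp
  show "integrable (distr M N (\<xi> r k)) (\<lambda>z. g v z - grad v)"
    using unbiased by simp
  have "prob (space N) = 1"
    using prob_space by simp
  then show "(\<integral>z. g v z - grad v \<partial>distr M N (\<xi> r k)) = 0"
    using unbiased by simp
qed

lemma w_avg_Suc:
  "w_avg (Suc t) \<omega> - wstar
     = exact_step t \<omega> + (- (\<eta> t / real K)) *\<^sub>R (\<Sum>k=1..K. g (w t k \<omega>) (\<xi> t k \<omega>) - grad (w t k \<omega>))"
proof -
  have "w_avg (Suc t) \<omega> = w_avg t \<omega> - \<eta> t *\<^sub>R ((1 / real K) *\<^sub>R (\<Sum>k=1..K. g (w t k \<omega>) (\<xi> t k \<omega>)))"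
    using sum_psgd_Suc[OF K, of w0 g "\<lambda>r k. \<xi> r k \<omega>" "\<lambda>r. \<eta> r" H layer Hl t]
    by (simp add: scaleR_diff_right)
  then show ?thesis
    by (simp add: sum_subtractf algebra_simps scaleR_diff_right)
qed

lemma nn_integral_round_noise_le:
  assumes var: "\<forall>k\<in>{1..K}. (\<integral>\<^sup>+z. ennreal ((norm (g (w t k \<omega>) z - grad (w t k \<omega>)))\<^sup>2)
      \<partial>distr M N (\<xi> t k)) \<le> ennreal (\<sigma>\<^sup>2)"
  shows "(\<integral>\<^sup>+x. ennreal ((norm (v + c *\<^sub>R (\<Sum>k=1..K. g (w t k \<omega>) (x (t, k)) - grad (w t k \<omega>))))\<^sup>2)
      \<partial>PiM ({t} \<times> {1..K}) (\<lambda>i. distr M N (noise i)))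
    \<le> ennreal ((norm v)\<^sup>2) + ennreal (c\<^sup>2 * (real K * \<sigma>\<^sup>2))"
proof -
  define T where "T = {t} \<times> {1..K}"
  define D where "D i = (\<lambda>z. g (w t (snd i) \<omega>) z - grad (w t (snd i) \<omega>))" for i :: "nat \<times> nat"
  have T: "T = Pair t ` {1..K}"
    by (auto simp: T_def)
  have distr_T: "distr M N (noise i) = distr M N (\<xi> t (snd i))" if "i \<in> T" for i
    using that by (auto simp: T_def)
  have var_T: "(\<integral>\<^sup>+z. ennreal ((norm (D i z))\<^sup>2) \<partial>distr M N (noise i)) \<le> ennreal (\<sigma>\<^sup>2)" if "i \<in> T" for i
    using that var by (auto simp: D_def distr_T T_def)
  have sum_T: "(\<Sum>k=1..K. g (w t k \<omega>) (x (t, k)) - grad (w t k \<omega>)) = (\<Sum>i\<in>T. D i (x i))" for x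
    by (simp add: T sum.reindex inj_on_def D_def)
  have "(\<integral>\<^sup>+x. ennreal ((norm (v + c *\<^sub>R (\<Sum>k=1..K. g (w t k \<omega>) (x (t, k)) - grad (w t k \<omega>))))\<^sup>2)
      \<partial>PiM T (\<lambda>i. distr M N (noise i)))
    = ennreal ((norm v)\<^sup>2) + ennreal (c\<^sup>2) * (\<Sum>i\<in>T. \<integral>\<^sup>+z. ennreal ((norm (D i z))\<^sup>2) \<partial>distr M N (noise i))"
    unfolding sum_T
  proof (rule nn_integral_PiM_norm_add_sum_centered_squared[OF noise_distr_prob_space])
    fix i assume "i \<in> T"
    then show "integrable (distr M N (noise i)) (D i)" "(\<integral>z. D i z \<partial>distr M N (noise i)) = 0"
      by (simp_all add: D_def distr_T stoch_grad_centered)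
    show "(\<integral>\<^sup>+z. ennreal ((norm (D i z))\<^sup>2) \<partial>distr M N (noise i)) < \<infinity>"
      using var_T[OF \<open>i \<in> T\<close>] by (simp add: le_less_trans)
  qed (simp add: T_def)
  also have "\<dots> \<le> ennreal ((norm v)\<^sup>2) + ennreal (c\<^sup>2) * (\<Sum>i\<in>T. ennreal (\<sigma>\<^sup>2))"
    using var_T by (intro add_left_mono mult_left_mono sum_mono) auto
  also have "\<dots> = ennreal ((norm v)\<^sup>2) + ennreal (c\<^sup>2 * (real K * \<sigma>\<^sup>2))"
    using card_image[of "Pair t" "{1..K}"] by (simp add: T inj_on_def ennreal_of_nat_eq_real_of_nat ennreal_mult)
  finally show ?thesis
    by (simp only: T_def)
qed

lemma expected_dist_sq_Suc_le:
  assumes "t < R"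
  shows "(\<integral>\<^sup>+\<omega>. ennreal ((norm (w_avg (Suc t) \<omega> - wstar))\<^sup>2) \<partial>M)
     \<le> (\<integral>\<^sup>+\<omega>. ennreal ((norm (exact_step t \<omega>))\<^sup>2) \<partial>M) + ennreal ((\<eta> t)\<^sup>2 * \<sigma>\<^sup>2 / real K)"
proof -
  interpret prob_space M by (rule M)
  define J where "J = {..<t} \<times> {1..K}"
  define T where "T = {t} \<times> {1..K}"
  define c where "c = - (\<eta> t / real K)"
  have "(- (e / real K))\<^sup>2 * (real K * \<sigma>\<^sup>2) = e\<^sup>2 * \<sigma>\<^sup>2 / real K" for e
    using K by (simp add: power2_eq_square field_simps)
  then have c_squared: "c\<^sup>2 * (real K * \<sigma>\<^sup>2) = (\<eta> t)\<^sup>2 * \<sigma>\<^sup>2 / real K"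
    unfolding c_def .
  define B where "B y = (1 / real K) *\<^sub>R (\<Sum>k=1..K. w_of t k y) - wstar
      - \<eta> t *\<^sub>R ((1 / real K) *\<^sub>R (\<Sum>k=1..K. grad (w_of t k y)))" for y :: "nat \<times> nat \<Rightarrow> 'b"
  define h where "h y x = ennreal ((norm (B y + c *\<^sub>R (\<Sum>k=1..K. g (w_of t k y) (x (t, k)) - grad (w_of t k y))))\<^sup>2)"
    for y x :: "nat \<times> nat \<Rightarrow> 'b"
  have "w_of t k (\<lambda>i\<in>J. noise i \<omega>) = w t k \<omega>" if "k \<in> {1..K}" for k \<omega>
    using that by (intro w_of_restrict_noise) (auto simp: J_def)
  then have "(\<Sum>k=1..K. w_of t k (\<lambda>i\<in>J. noise i \<omega>)) = (\<Sum>k=1..K. w t k \<omega>)"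
    "(\<Sum>k=1..K. grad (w_of t k (\<lambda>i\<in>J. noise i \<omega>))) = (\<Sum>k=1..K. grad (w t k \<omega>))"
    "(\<Sum>k=1..K. g (w_of t k (\<lambda>i\<in>J. noise i \<omega>)) (x (t, k)) - grad (w_of t k (\<lambda>i\<in>J. noise i \<omega>)))
      = (\<Sum>k=1..K. g (w t k \<omega>) (x (t, k)) - grad (w t k \<omega>))" for \<omega> x
    by (auto intro: sum.cong simp del: restrict_apply)
  then have h_past: "h (\<lambda>i\<in>J. noise i \<omega>) x
      = ennreal ((norm (exact_step t \<omega> + c *\<^sub>R (\<Sum>k=1..K. g (w t k \<omega>) (x (t, k)) - grad (w t k \<omega>))))\<^sup>2)" for \<omega> x
    by (simp only: h_def B_def)
  have "(\<integral>\<^sup>+\<omega>. ennreal ((norm (w_avg (Suc t) \<omega> - wstar))\<^sup>2) \<partial>M)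
      = (\<integral>\<^sup>+\<omega>. h (\<lambda>i\<in>J. noise i \<omega>) (\<lambda>i\<in>T. noise i \<omega>) \<partial>M)"
  proof (rule nn_integral_cong)
    fix \<omega>
    have "(\<Sum>k=1..K. g (w t k \<omega>) ((\<lambda>i\<in>T. noise i \<omega>) (t, k)) - grad (w t k \<omega>))
        = (\<Sum>k=1..K. g (w t k \<omega>) (\<xi> t k \<omega>) - grad (w t k \<omega>))"
      by (auto intro: sum.cong simp: T_def)
    then show "ennreal ((norm (w_avg (Suc t) \<omega> - wstar))\<^sup>2) = h (\<lambda>i\<in>J. noise i \<omega>) (\<lambda>i\<in>T. noise i \<omega>)"
      by (simp only: h_past w_avg_Suc c_def)
  qed
  also have "\<dots> = (\<integral>\<^sup>+\<omega>. (\<integral>\<^sup>+x. h (\<lambda>i\<in>J. noise i \<omega>) x \<partial>PiM T (\<lambda>i. distr M N (noise i))) \<partial>M)"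
  proof -
    let ?P = "PiM J (\<lambda>_. N) \<Otimes>\<^sub>M PiM T (\<lambda>_. N)"
    have w: "(\<lambda>p. w_of t k (fst p)) \<in> borel_measurable ?P" if "k \<in> {1..K}" for k
      using that by (intro w_of_fst_measurable) (auto simp: J_def)
    have "(\<lambda>p. B (fst p)) \<in> borel_measurable ?P"
      unfolding B_def using w by (intro borel_measurable_sum borel_measurable_diff borel_measurable_scaleR
          borel_measurable_const measurable_compose[OF _ grad_measurable]) auto
    moreover have "(\<lambda>p. \<Sum>k=1..K. g (w_of t k (fst p)) (snd p (t, k)) - grad (w_of t k (fst p))) \<in> borel_measurable ?P"
      using w by (intro borel_measurable_sum borel_measurable_diff measurable_g_compose snd_component_measurable
          measurable_compose[OF _ grad_measurable]) (auto simp: T_def)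
    ultimately have "case_prod h \<in> borel_measurable ?P"
      unfolding h_def case_prod_beta' by measurable
    then show ?thesis
      unfolding J_def T_def by (rule nn_integral_split_round)
  qed
  also have "\<dots> \<le> (\<integral>\<^sup>+\<omega>. ennreal ((norm (exact_step t \<omega>))\<^sup>2) + ennreal (c\<^sup>2 * (real K * \<sigma>\<^sup>2)) \<partial>M)"
  proof (rule nn_integral_mono_AE)
    have "AE \<omega> in M. \<forall>k\<in>{1..K}. (\<integral>\<^sup>+z. ennreal ((norm (g (w t k \<omega>) z - grad (w t k \<omega>)))\<^sup>2)
        \<partial>distr M N (\<xi> t k)) \<le> ennreal (\<sigma>\<^sup>2)"
      using variance \<open>t < R\<close> by (intro eventually_ball_finite) auto
    then show "AE \<omega> in M. (\<integral>\<^sup>+x. h (\<lambda>i\<in>J. noise i \<omega>) x \<partial>PiM T (\<lambda>i. distr M N (noise i)))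
        \<le> ennreal ((norm (exact_step t \<omega>))\<^sup>2) + ennreal (c\<^sup>2 * (real K * \<sigma>\<^sup>2))"
      unfolding h_past T_def by (rule eventually_mono) (rule nn_integral_round_noise_le)
  qed
  also have "\<dots> = (\<integral>\<^sup>+\<omega>. ennreal ((norm (exact_step t \<omega>))\<^sup>2) \<partial>M) + ennreal (c\<^sup>2 * (real K * \<sigma>\<^sup>2))"
    using exact_step_measurable by (subst nn_integral_add) (auto simp: emeasure_space_1)
  also note c_squared
  finally show ?thesis .
qed

lemma sum_stepsize_squared_window_le:
  "(\<Sum>s\<in>{s. s < t \<and> t < s + H}. (\<eta> s)\<^sup>2) \<le> real H * (4 * (\<eta> t)\<^sup>2)"
proof -
  have square: "(2 * x)\<^sup>2 = 4 * x\<^sup>2" for x :: real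
    by (simp add: power2_eq_square)
  have "(\<Sum>s\<in>{s. s < t \<and> t < s + H}. (\<eta> s)\<^sup>2) \<le> (\<Sum>s\<in>{s. s < t \<and> t < s + H}. 4 * (\<eta> t)\<^sup>2)"
  proof (rule sum_mono)
    fix s assume "s \<in> {s. s < t \<and> t < s + H}"
    then have "(\<eta> s)\<^sup>2 \<le> (2 * \<eta> t)\<^sup>2"
      using stepsize_bounds(1)[of s] by (intro power_mono stepsize_le_twice) auto
    then show "(\<eta> s)\<^sup>2 \<le> 4 * (\<eta> t)\<^sup>2"
      by (simp only: square)
  qed
  also have "\<dots> = real (card {s. s < t \<and> t < s + H}) * (4 * (\<eta> t)\<^sup>2)"
    by (rule sum_constant)
  also have "\<dots> \<le> real H * (4 * (\<eta> t)\<^sup>2)"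
  proof (rule mult_right_mono)
    have "card {s. s < t \<and> t < s + H} \<le> card {t - H..<t}"
      by (intro card_mono) auto
    then show "real (card {s. s < t \<and> t < s + H}) \<le> real H"
      by simp
  qed simp
  finally show ?thesis .
qed

lemma expected_deviation_le:
  assumes "t < R"
  shows "(\<integral>\<^sup>+\<omega>. ennreal ((1 / real K) * (\<Sum>k=1..K. (norm (w_avg t \<omega> - w t k \<omega>))\<^sup>2)) \<partial>M)
      \<le> ennreal (4 * (\<eta> t)\<^sup>2 * G\<^sup>2 * (real H)\<^sup>2)"
proof -
  interpret prob_space M by (rule M)
  define W where "W = {s. s < t \<and> t < s + H}"
  define c where "c s = real H / real K * (\<eta> s)\<^sup>2" for s
  have c: "0 \<le> c s" for s by (simp add: c_def)
  have grad_meas: "(\<lambda>\<omega>. ennreal ((norm (g (w s k \<omega>) (\<xi> s k \<omega>)))\<^sup>2)) \<in> borel_measurable M"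
    if "k \<in> {1..K}" for s k
    using iterate_measurable[OF that] xi_meas by (intro measurable_compose[OF measurable_g_compose]) auto
  have "(\<integral>\<^sup>+\<omega>. ennreal ((1 / real K) * (\<Sum>k=1..K. (norm (w_avg t \<omega> - w t k \<omega>))\<^sup>2)) \<partial>M)
      \<le> (\<integral>\<^sup>+\<omega>. (\<Sum>s\<in>W. \<Sum>k=1..K. ennreal (c s) * ennreal ((norm (g (w s k \<omega>) (\<xi> s k \<omega>)))\<^sup>2)) \<partial>M)"
  proof (rule nn_integral_mono)
    fix \<omega>
    have "(1 / real K) * (\<Sum>k=1..K. (norm (w_avg t \<omega> - w t k \<omega>))\<^sup>2)
        \<le> (1 / real K) * (real H * (\<Sum>s\<in>W. (\<eta> s)\<^sup>2 * (\<Sum>k=1..K. (norm (g (w s k \<omega>) (\<xi> s k \<omega>)))\<^sup>2)))"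
      unfolding W_def using H K by (intro mult_left_mono psgd_deviation_le) auto
    also have "\<dots> = (\<Sum>s\<in>W. \<Sum>k=1..K. c s * (norm (g (w s k \<omega>) (\<xi> s k \<omega>)))\<^sup>2)"
      by (simp add: c_def sum_distrib_left mult.assoc)
    finally have "ennreal ((1 / real K) * (\<Sum>k=1..K. (norm (w_avg t \<omega> - w t k \<omega>))\<^sup>2))
        \<le> ennreal (\<Sum>s\<in>W. \<Sum>k=1..K. c s * (norm (g (w s k \<omega>) (\<xi> s k \<omega>)))\<^sup>2)"
      by (rule ennreal_leI)
    also have "\<dots> = (\<Sum>s\<in>W. \<Sum>k=1..K. ennreal (c s * (norm (g (w s k \<omega>) (\<xi> s k \<omega>)))\<^sup>2))"
      using c by (simp add: sum_nonneg)
    also have "\<dots> = (\<Sum>s\<in>W. \<Sum>k=1..K. ennreal (c s) * ennreal ((norm (g (w s k \<omega>) (\<xi> s k \<omega>)))\<^sup>2))"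
      using c by (simp add: ennreal_mult)
    finally show "ennreal ((1 / real K) * (\<Sum>k=1..K. (norm (w_avg t \<omega> - w t k \<omega>))\<^sup>2))
        \<le> (\<Sum>s\<in>W. \<Sum>k=1..K. ennreal (c s) * ennreal ((norm (g (w s k \<omega>) (\<xi> s k \<omega>)))\<^sup>2))" .
  qed
  also have "\<dots> = (\<Sum>s\<in>W. \<Sum>k=1..K. ennreal (c s) * (\<integral>\<^sup>+\<omega>. ennreal ((norm (g (w s k \<omega>) (\<xi> s k \<omega>)))\<^sup>2) \<partial>M))"
    using grad_meas
    by (subst nn_integral_sum, auto intro!: borel_measurable_sum sum.cong nn_integral_sum[THEN trans] nn_integral_cmult)
  also have "\<dots> \<le> (\<Sum>s\<in>W. \<Sum>k=1..K. ennreal (c s) * ennreal (G\<^sup>2))"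
    using \<open>t < R\<close> by (intro sum_mono mult_left_mono expected_norm_stoch_grad_squared_le) (auto simp: W_def)
  also have "\<dots> = ennreal (\<Sum>s\<in>W. \<Sum>k=1..K. c s * G\<^sup>2)"
    using c by (simp only: ennreal_mult[symmetric] zero_le_power2 mult_nonneg_nonneg sum_nonneg sum_ennreal)
  also have "\<dots> \<le> ennreal (4 * (\<eta> t)\<^sup>2 * G\<^sup>2 * (real H)\<^sup>2)"
  proof (rule ennreal_leI)
    have square: "real H * G\<^sup>2 * (real H * (4 * e)) = 4 * e * G\<^sup>2 * (real H)\<^sup>2" for e
      by (simp add: power2_eq_square mult_ac)
    have "(\<Sum>s\<in>W. \<Sum>k=1..K. c s * G\<^sup>2) = real H * G\<^sup>2 * (\<Sum>s\<in>W. (\<eta> s)\<^sup>2)"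
      using K by (simp add: c_def sum_distrib_left mult_ac)
    also have "\<dots> \<le> real H * G\<^sup>2 * (real H * (4 * (\<eta> t)\<^sup>2))"
      unfolding W_def by (intro mult_left_mono sum_stepsize_squared_window_le) simp
    finally show "(\<Sum>s\<in>W. \<Sum>k=1..K. c s * G\<^sup>2) \<le> 4 * (\<eta> t)\<^sup>2 * G\<^sup>2 * (real H)\<^sup>2"
      by (simp only: square)
  qed
  finally show ?thesis .
qed

abbreviation "dist_sq r \<equiv> \<integral>\<^sup>+\<omega>. ennreal ((norm (w_avg r \<omega> - wstar))\<^sup>2) \<partial>M"
abbreviation "gap r \<equiv> \<integral>\<^sup>+\<omega>. ennreal (f (w_avg r \<omega>) - f wstar) \<partial>M"
abbreviation "step_error r \<equiv> (\<eta> r)\<^sup>2 * \<sigma>\<^sup>2 / real K + 8 * \<beta> * (\<eta> r) ^ 3 * G\<^sup>2 * (real H)\<^sup>2"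
(* The weights make the recursion telescope: weight r * eta r = (a + r)^2 and
   weight r * (1 - mu * eta r) <= weight (r - 1). *)
abbreviation "weight r \<equiv> \<mu> * (a + real r) ^ 3 / 4"

lemma expected_exact_step_le:
  assumes "t < R"
  shows "(\<integral>\<^sup>+\<omega>. ennreal ((norm (exact_step t \<omega>))\<^sup>2) \<partial>M) + ennreal (\<eta> t / 2) * gap t
     \<le> ennreal (1 - \<mu> * \<eta> t) * dist_sq t + ennreal (8 * \<beta> * (\<eta> t) ^ 3 * G\<^sup>2 * (real H)\<^sup>2)"
proof -
  define V where "V \<omega> = (1 / real K) * (\<Sum>k=1..K. (norm (w_avg t \<omega> - w t k \<omega>))\<^sup>2)" for \<omega>
  have V: "0 \<le> V \<omega>" for \<omega> by (simp add: V_def sum_nonneg)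
  have \<eta>: "0 \<le> \<eta> t / 2" "0 \<le> 1 - \<mu> * \<eta> t" "0 \<le> 2 * \<beta> * \<eta> t"
    using stepsize_bounds[of t] beta_pos by simp_all
  have gap: "0 \<le> f (w_avg t \<omega>) - f wstar" for \<omega>
    using minimizer by simp
  have "(\<lambda>\<omega>. (norm (w_avg t \<omega> - w t k \<omega>))\<^sup>2) \<in> borel_measurable M" if "k \<in> {1..K}" for k
    using w_avg_measurable iterate_measurable[OF that] by measurable
  then have "(\<lambda>\<omega>. V \<omega>) \<in> borel_measurable M"
    unfolding V_def by (intro borel_measurable_times borel_measurable_const borel_measurable_sum)
  with exact_step_measurable w_avg_measurable
  have meas: "(\<lambda>\<omega>. ennreal ((norm (exact_step t \<omega>))\<^sup>2)) \<in> borel_measurable M"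
    "(\<lambda>\<omega>. ennreal (f (w_avg t \<omega>) - f wstar)) \<in> borel_measurable M"
    "(\<lambda>\<omega>. ennreal ((norm (w_avg t \<omega> - wstar))\<^sup>2)) \<in> borel_measurable M"
    "(\<lambda>\<omega>. ennreal (V \<omega>)) \<in> borel_measurable M"
    by measurable
  have "(\<integral>\<^sup>+\<omega>. ennreal ((norm (exact_step t \<omega>))\<^sup>2) \<partial>M) + ennreal (\<eta> t / 2) * gap t
      = (\<integral>\<^sup>+\<omega>. ennreal ((norm (exact_step t \<omega>))\<^sup>2) + ennreal (\<eta> t / 2) * ennreal (f (w_avg t \<omega>) - f wstar) \<partial>M)"
    using meas by (simp add: nn_integral_add nn_integral_cmult)
  also have "\<dots> = (\<integral>\<^sup>+\<omega>. ennreal ((norm (exact_step t \<omega>))\<^sup>2 + \<eta> t / 2 * (f (w_avg t \<omega>) - f wstar)) \<partial>M)"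
    using \<eta> gap by (intro nn_integral_cong) (simp only: ennreal_plus ennreal_mult zero_le_power2 mult_nonneg_nonneg)
  also have "\<dots> \<le> (\<integral>\<^sup>+\<omega>. ennreal ((1 - \<mu> * \<eta> t) * (norm (w_avg t \<omega> - wstar))\<^sup>2 + 2 * \<beta> * \<eta> t * V \<omega>) \<partial>M)"
    unfolding V_def using averaged_gradient_step[OF smooth sconv minimizer stepsize_bounds(1,2), of "{1..K}"] K
    by (intro nn_integral_mono ennreal_leI) simp
  also have "\<dots> = (\<integral>\<^sup>+\<omega>. ennreal (1 - \<mu> * \<eta> t) * ennreal ((norm (w_avg t \<omega> - wstar))\<^sup>2)
      + ennreal (2 * \<beta> * \<eta> t) * ennreal (V \<omega>) \<partial>M)"
    using \<eta> V by (intro nn_integral_cong) (simp only: ennreal_plus ennreal_mult zero_le_power2 mult_nonneg_nonneg)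
  also have "\<dots> = ennreal (1 - \<mu> * \<eta> t) * dist_sq t + ennreal (2 * \<beta> * \<eta> t) * (\<integral>\<^sup>+\<omega>. ennreal (V \<omega>) \<partial>M)"
    using meas by (simp add: nn_integral_add nn_integral_cmult)
  also have "\<dots> \<le> ennreal (1 - \<mu> * \<eta> t) * dist_sq t + ennreal (2 * \<beta> * \<eta> t) * ennreal (4 * (\<eta> t)\<^sup>2 * G\<^sup>2 * (real H)\<^sup>2)"
    unfolding V_def using \<open>t < R\<close> by (intro add_left_mono mult_left_mono expected_deviation_le) auto
  also have "ennreal (2 * \<beta> * \<eta> t) * ennreal (4 * (\<eta> t)\<^sup>2 * G\<^sup>2 * (real H)\<^sup>2)
      = ennreal (8 * \<beta> * (\<eta> t) ^ 3 * G\<^sup>2 * (real H)\<^sup>2)"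
  proof -
    have cube: "(2 * \<beta> * e) * (4 * e\<^sup>2 * G\<^sup>2 * (real H)\<^sup>2) = 8 * \<beta> * e ^ 3 * G\<^sup>2 * (real H)\<^sup>2" for e
      by (simp add: power2_eq_square power3_eq_cube mult_ac)
    have "ennreal (2 * \<beta> * \<eta> t) * ennreal (4 * (\<eta> t)\<^sup>2 * G\<^sup>2 * (real H)\<^sup>2)
        = ennreal ((2 * \<beta> * \<eta> t) * (4 * (\<eta> t)\<^sup>2 * G\<^sup>2 * (real H)\<^sup>2))"
      by (rule ennreal_mult[symmetric]) (use \<eta>(3) in auto)
    then show ?thesis
      by (simp only: cube)
  qed
  finally show ?thesis .
qed

lemma expected_one_step:
  assumes "t < R"
  shows "dist_sq (Suc t) + ennreal (\<eta> t / 2) * gap t \<le> ennreal (1 - \<mu> * \<eta> t) * dist_sq t + ennreal (step_error t)"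
proof -
  have combine: "X + E \<le> C + ennreal (s1 + s2)"
    if "X \<le> B + ennreal s1" "B + E \<le> C + ennreal s2" "0 \<le> s1" "0 \<le> s2" for X B E C :: ennreal and s1 s2 :: real
  proof -
    have "X + E \<le> (B + E) + ennreal s1"
      using that(1) add_right_mono by (fastforce simp: ac_simps)
    also have "\<dots> \<le> C + ennreal s2 + ennreal s1"
      using that(2) by (rule add_right_mono)
    finally show ?thesis
      using that(3,4) by (simp add: ennreal_plus ac_simps)
  qed
  show ?thesis
    using stepsize_bounds(1)[of t] beta_pos
    by (intro combine[OF expected_dist_sq_Suc_le[OF assms] expected_exact_step_le[OF assms]]) auto
qed

lemma weighted_one_step:
  assumes "t < R"
  shows "ennreal (weight t) * dist_sq (Suc t) + ennreal ((a + real t)\<^sup>2 / 2) * gap t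
     \<le> ennreal (\<mu> * (a + real t - 1) ^ 3 / 4) * dist_sq t + ennreal (weight t * step_error t)"
proof -
  have scale: "ennreal c * X + ennreal (c * e) * E \<le> ennreal c' * Y + ennreal (c * s)"
    if "X + ennreal e * E \<le> ennreal d * Y + ennreal s" "0 \<le> c" "0 \<le> e" "0 \<le> d" "0 \<le> s" "c * d \<le> c'"
    for X E Y :: ennreal and c e d c' s :: real
  proof -
    have "ennreal c * X + ennreal (c * e) * E = ennreal c * (X + ennreal e * E)"
      using that by (simp add: distrib_left ennreal_mult mult.assoc)
    also have "\<dots> \<le> ennreal c * (ennreal d * Y + ennreal s)"
      using that(1) by (rule mult_left_mono) simp
    also have "\<dots> = ennreal (c * d) * Y + ennreal (c * s)"
      using that by (simp add: distrib_left ennreal_mult mult.assoc)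
    also have "\<dots> \<le> ennreal c' * Y + ennreal (c * s)"
      using that(6) by (intro add_right_mono mult_right_mono ennreal_leI) simp_all
    finally show ?thesis .
  qed
  have "0 < a + real t" "1 \<le> a + real t"
    using a_ge_16 by simp_all
  have half: "weight t * (\<eta> t / 2) = (a + real t)\<^sup>2 / 2"
    using cubic_weight_times_stepsize[OF mu_pos \<open>0 < a + real t\<close>] by (simp only: times_divide_eq_right)
  have "ennreal (weight t) * dist_sq (Suc t) + ennreal (weight t * (\<eta> t / 2)) * gap t
     \<le> ennreal (\<mu> * (a + real t - 1) ^ 3 / 4) * dist_sq t + ennreal (weight t * step_error t)"
    using mu_pos a_ge_16 stepsize_bounds[of t] beta_pos
    by (intro scale[OF expected_one_step[OF assms] _ _ _ _ cubic_weight_contraction_le[OF mu_pos \<open>1 \<le> a + real t\<close>]])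
      auto
  then show ?thesis
    unfolding half .
qed

lemma weighted_telescoping:
  assumes "T \<le> R"
  shows "ennreal (\<mu> * (a + real T - 1) ^ 3 / 4) * dist_sq T + (\<Sum>t<T. ennreal ((a + real t)\<^sup>2 / 2) * gap t)
     \<le> ennreal (\<mu> * a ^ 3 / 4) * dist_sq 0 + ennreal (\<Sum>t<T. weight t * step_error t)"
  using assms
proof (induction T)
  case 0
  have "\<mu> * (a - 1) ^ 3 / 4 \<le> \<mu> * a ^ 3 / 4"
    using mu_pos a_ge_16 by (simp add: power_mono)
  then show ?case
    by (simp add: mult_right_mono ennreal_leI)
next
  case (Suc T)
  have nonneg: "0 \<le> weight t * step_error t" for t
    using mu_pos a_ge_16 stepsize_bounds(1)[of t] beta_pos by simp
  have weight: "\<mu> * (a + real (Suc T) - 1) ^ 3 / 4 = weight T"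
    by simp
  have "ennreal (weight T) * dist_sq (Suc T) + (\<Sum>t<Suc T. ennreal ((a + real t)\<^sup>2 / 2) * gap t)
      = (ennreal (weight T) * dist_sq (Suc T) + ennreal ((a + real T)\<^sup>2 / 2) * gap T)
        + (\<Sum>t<T. ennreal ((a + real t)\<^sup>2 / 2) * gap t)"
    by (simp only: sum.lessThan_Suc ac_simps)
  also have "\<dots> \<le> (ennreal (\<mu> * (a + real T - 1) ^ 3 / 4) * dist_sq T + ennreal (weight T * step_error T))
        + (\<Sum>t<T. ennreal ((a + real t)\<^sup>2 / 2) * gap t)"
    using Suc.prems by (intro add_right_mono weighted_one_step) simp
  also have "\<dots> = (ennreal (\<mu> * (a + real T - 1) ^ 3 / 4) * dist_sq T
        + (\<Sum>t<T. ennreal ((a + real t)\<^sup>2 / 2) * gap t)) + ennreal (weight T * step_error T)"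
    by (simp only: ac_simps)
  also have "\<dots> \<le> (ennreal (\<mu> * a ^ 3 / 4) * dist_sq 0 + ennreal (\<Sum>t<T. weight t * step_error t))
        + ennreal (weight T * step_error T)"
    using Suc by (intro add_right_mono) simp
  also have "\<dots> = ennreal (\<mu> * a ^ 3 / 4) * dist_sq 0 + ennreal (\<Sum>t<Suc T. weight t * step_error t)"
    using nonneg by (simp add: ennreal_plus sum_nonneg add.assoc)
  finally show ?case
    by (simp only: weight)
qed

lemma sum_weighted_step_error_le:
  "(\<Sum>t<R. weight t * step_error t)
     \<le> 2 * real R * (real R + 2 * a) * \<sigma>\<^sup>2 / (\<mu> * real K) + 128 * real R * \<beta> * G\<^sup>2 * (real H)\<^sup>2 / \<mu>\<^sup>2"
proof -
  have "(\<Sum>t<R. weight t * step_error t)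
      = (\<Sum>t<R. 4 * \<sigma>\<^sup>2 / (\<mu> * real K) * (a + real t) + 128 * \<beta> * G\<^sup>2 * (real H)\<^sup>2 / \<mu>\<^sup>2)"
    using a_ge_16 by (intro sum.cong refl cubic_weight_times_step_error[OF mu_pos]) simp
  also have "\<dots> = 4 * \<sigma>\<^sup>2 / (\<mu> * real K) * (\<Sum>t<R. a + real t) + real R * (128 * \<beta> * G\<^sup>2 * (real H)\<^sup>2 / \<mu>\<^sup>2)"
    by (simp only: sum.distrib sum_distrib_left[symmetric]) simp
  also have "\<dots> \<le> 4 * \<sigma>\<^sup>2 / (\<mu> * real K) * (real R * (real R + 2 * a) / 2)
      + real R * (128 * \<beta> * G\<^sup>2 * (real H)\<^sup>2 / \<mu>\<^sup>2)"
    using mu_pos by (intro add_right_mono mult_left_mono sum_shifted_le) simp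
  also have "\<dots> = 2 * real R * (real R + 2 * a) * \<sigma>\<^sup>2 / (\<mu> * real K) + 128 * real R * \<beta> * G\<^sup>2 * (real H)\<^sup>2 / \<mu>\<^sup>2"
    using mu_pos K by (simp add: field_simps)
  finally show ?thesis .
qed

abbreviation "S \<equiv> \<Sum>r<R. (a + real r)\<^sup>2"

lemma S_pos: "S > 0"
proof -
  have "0 < (a + real 0)\<^sup>2"
    using a_ge_16 by simp
  also have "\<dots> \<le> S"
    using R by (intro member_le_sum) auto
  finally show ?thesis .
qed

lemma expected_gap_weighted_average_le:
  "(\<integral>\<^sup>+\<omega>. ennreal (f ((1 / (real K * S)) *\<^sub>R (\<Sum>k=1..K. \<Sum>r<R. (a + real r)\<^sup>2 *\<^sub>R w r k \<omega>)) - f wstar) \<partial>M)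
     \<le> ennreal (2 / S) * (\<Sum>r<R. ennreal ((a + real r)\<^sup>2 / 2) * gap r)"
proof -
  have pointwise: "f ((1 / (real K * S)) *\<^sub>R (\<Sum>k=1..K. \<Sum>r<R. (a + real r)\<^sup>2 *\<^sub>R w r k \<omega>)) - f wstar
      \<le> 2 / S * (\<Sum>r<R. (a + real r)\<^sup>2 / 2 * (f (w_avg r \<omega>) - f wstar))" for \<omega>
  proof -
    define wt where "wt r = (a + real r)\<^sup>2 / S" for r
    have wt: "(\<Sum>r<R. wt r) = 1" "\<And>r. 0 \<le> wt r"
      using S_pos by (simp_all add: wt_def flip: sum_divide_distrib)
    have "(1 / (real K * S)) *\<^sub>R (\<Sum>k=1..K. \<Sum>r<R. (a + real r)\<^sup>2 *\<^sub>R w r k \<omega>) = (\<Sum>r<R. wt r *\<^sub>R w_avg r \<omega>)"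
      using K S_pos by (subst sum.swap) (simp add: wt_def scaleR_sum_right field_simps)
    moreover have "f (\<Sum>r<R. wt r *\<^sub>R w_avg r \<omega>) \<le> (\<Sum>r<R. wt r * f (w_avg r \<omega>))"
      using R wt by (intro convex_on_sum[OF _ _ strongly_convex_imp_convex_on[OF sconv]]) auto
    ultimately have "f ((1 / (real K * S)) *\<^sub>R (\<Sum>k=1..K. \<Sum>r<R. (a + real r)\<^sup>2 *\<^sub>R w r k \<omega>))
        \<le> (\<Sum>r<R. wt r * f (w_avg r \<omega>))"
      by (simp only:)
    also have "\<dots> = (\<Sum>r<R. wt r * (f (w_avg r \<omega>) - f wstar)) + f wstar"
      using wt(1) by (simp add: right_diff_distrib sum_subtractf flip: sum_distrib_right)
    also have "(\<Sum>r<R. wt r * (f (w_avg r \<omega>) - f wstar)) = 2 / S * (\<Sum>r<R. (a + real r)\<^sup>2 / 2 * (f (w_avg r \<omega>) - f wstar))"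
      by (simp add: wt_def sum_distrib_left)
    finally show ?thesis by simp
  qed
  have "(\<integral>\<^sup>+\<omega>. ennreal (f ((1 / (real K * S)) *\<^sub>R (\<Sum>k=1..K. \<Sum>r<R. (a + real r)\<^sup>2 *\<^sub>R w r k \<omega>)) - f wstar) \<partial>M)
      \<le> (\<integral>\<^sup>+\<omega>. ennreal (2 / S) * (\<Sum>r<R. ennreal ((a + real r)\<^sup>2 / 2) * ennreal (f (w_avg r \<omega>) - f wstar)) \<partial>M)"
  proof (rule nn_integral_mono)
    fix \<omega>
    have "0 \<le> (a + real r)\<^sup>2 / 2 * (f (w_avg r \<omega>) - f wstar)" for r
      using minimizer by simp
    with pointwise[of \<omega>] S_pos minimizer
    show "ennreal (f ((1 / (real K * S)) *\<^sub>R (\<Sum>k=1..K. \<Sum>r<R. (a + real r)\<^sup>2 *\<^sub>R w r k \<omega>)) - f wstar)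
        \<le> ennreal (2 / S) * (\<Sum>r<R. ennreal ((a + real r)\<^sup>2 / 2) * ennreal (f (w_avg r \<omega>) - f wstar))"
      by (auto simp: ennreal_mult[symmetric] sum_nonneg intro!: ennreal_leI)
  qed
  also have "\<dots> = ennreal (2 / S) * (\<Sum>r<R. ennreal ((a + real r)\<^sup>2 / 2) * gap r)"
    using w_avg_measurable by (simp add: nn_integral_cmult nn_integral_sum)
  finally show ?thesis .
qed

lemma weighted_bound_le_rate:
  "2 / S * (\<mu> * a ^ 3 / 4 * (norm (w0 - wstar))\<^sup>2 + (\<Sum>t<R. weight t * step_error t))
     \<le> \<mu> * a ^ 3 / (2 * S) * (norm (w0 - wstar))\<^sup>2
       + 4 * real R * (real R + 2 * a) / (\<mu> * real K * S) * \<sigma>\<^sup>2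
       + 256 * real R / (\<mu>\<^sup>2 * S) * G\<^sup>2 * (real H)\<^sup>2 * \<beta>"
proof -
  have "2 / S * (\<mu> * a ^ 3 / 4 * (norm (w0 - wstar))\<^sup>2 + (\<Sum>t<R. weight t * step_error t))
      \<le> 2 / S * (\<mu> * a ^ 3 / 4 * (norm (w0 - wstar))\<^sup>2 + (2 * real R * (real R + 2 * a) * \<sigma>\<^sup>2 / (\<mu> * real K)
        + 128 * real R * \<beta> * G\<^sup>2 * (real H)\<^sup>2 / \<mu>\<^sup>2))"
    using S_pos by (intro mult_left_mono add_left_mono sum_weighted_step_error_le) simp
  also have "\<dots> = \<mu> * a ^ 3 / (2 * S) * (norm (w0 - wstar))\<^sup>2
      + 4 * real R * (real R + 2 * a) / (\<mu> * real K * S) * \<sigma>\<^sup>2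
      + 256 * real R / (\<mu>\<^sup>2 * S) * G\<^sup>2 * (real H)\<^sup>2 * \<beta>"
    using S_pos mu_pos K by (simp add: field_simps power2_eq_square)
  finally show ?thesis .
qed

lemma expected_gap_le:
  "(\<integral>\<^sup>+\<omega>. ennreal (f ((1 / (real K * S)) *\<^sub>R (\<Sum>k=1..K. \<Sum>r<R. (a + real r)\<^sup>2 *\<^sub>R w r k \<omega>)) - f wstar) \<partial>M)
     \<le> ennreal (\<mu> * a ^ 3 / (2 * S) * (norm (w0 - wstar))\<^sup>2
        + 4 * real R * (real R + 2 * a) / (\<mu> * real K * S) * \<sigma>\<^sup>2
        + 256 * real R / (\<mu>\<^sup>2 * S) * G\<^sup>2 * (real H)\<^sup>2 * \<beta>)"
proof -
  interpret prob_space M by (rule M)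
  have nonneg: "0 \<le> \<mu> * a ^ 3 / 4" "0 \<le> \<mu> * a ^ 3 / 4 * (norm (w0 - wstar))\<^sup>2"
    "0 \<le> (\<Sum>t<R. weight t * step_error t)"
    using mu_pos a_ge_16 stepsize_bounds(1) beta_pos by (auto intro!: sum_nonneg)
  have "dist_sq 0 = ennreal ((norm (w0 - wstar))\<^sup>2)"
    using K by (simp add: emeasure_space_1 sum_constant_scaleR del: sum_constant)
  then have "(\<Sum>r<R. ennreal ((a + real r)\<^sup>2 / 2) * gap r)
      \<le> ennreal (\<mu> * a ^ 3 / 4) * ennreal ((norm (w0 - wstar))\<^sup>2) + ennreal (\<Sum>t<R. weight t * step_error t)"
    using order_trans[OF add_increasing[OF zero_le order_refl] weighted_telescoping[OF order_refl]] by simp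
  also have "\<dots> = ennreal (\<mu> * a ^ 3 / 4 * (norm (w0 - wstar))\<^sup>2 + (\<Sum>t<R. weight t * step_error t))"
    using nonneg by (simp only: ennreal_mult[symmetric] ennreal_plus[symmetric] zero_le_power2)
  finally have telescoped: "(\<Sum>r<R. ennreal ((a + real r)\<^sup>2 / 2) * gap r)
      \<le> ennreal (\<mu> * a ^ 3 / 4 * (norm (w0 - wstar))\<^sup>2 + (\<Sum>t<R. weight t * step_error t))" .
  have "(\<integral>\<^sup>+\<omega>. ennreal (f ((1 / (real K * S)) *\<^sub>R (\<Sum>k=1..K. \<Sum>r<R. (a + real r)\<^sup>2 *\<^sub>R w r k \<omega>)) - f wstar) \<partial>M)
      \<le> ennreal (2 / S) * (\<Sum>r<R. ennreal ((a + real r)\<^sup>2 / 2) * gap r)"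
    by (rule expected_gap_weighted_average_le)
  also have "\<dots> \<le> ennreal (2 / S) * ennreal (\<mu> * a ^ 3 / 4 * (norm (w0 - wstar))\<^sup>2 + (\<Sum>t<R. weight t * step_error t))"
    using telescoped by (rule mult_left_mono) simp
  also have "\<dots> = ennreal (2 / S * (\<mu> * a ^ 3 / 4 * (norm (w0 - wstar))\<^sup>2 + (\<Sum>t<R. weight t * step_error t)))"
    using S_pos nonneg by (intro ennreal_mult[symmetric]) auto
  also have "\<dots> \<le> ennreal (\<mu> * a ^ 3 / (2 * S) * (norm (w0 - wstar))\<^sup>2
        + 4 * real R * (real R + 2 * a) / (\<mu> * real K * S) * \<sigma>\<^sup>2
        + 256 * real R / (\<mu>\<^sup>2 * S) * G\<^sup>2 * (real H)\<^sup>2 * \<beta>)"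
    by (rule ennreal_leI[OF weighted_bound_le_rate])
  finally show ?thesis .
qed

end

theorem theorem1:
  fixes M :: "'o measure" and N :: "'b measure"
    and f :: "real^'d \<Rightarrow> real" and grad :: "real^'d \<Rightarrow> real^'d"
    and g :: "real^'d \<Rightarrow> 'b \<Rightarrow> real^'d"
    and \<xi> :: "nat \<Rightarrow> nat \<Rightarrow> 'o \<Rightarrow> 'b"
    and w0 wstar :: "real^'d"
    and \<beta> \<mu> a \<sigma> G :: real
    and K R H L :: nat
    and layer :: "'d \<Rightarrow> nat" and Hl :: "nat \<Rightarrow> nat"
  defines "w \<equiv> (\<lambda>r k \<omega>. psgd w0 g (\<lambda>r k. \<xi> r k \<omega>) (\<lambda>r. 4 / (\<mu> * (a + real r))) H layer Hl K r k)"
    and "p \<equiv> (\<lambda>r. (a + real r)\<^sup>2)"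
    and "S \<equiv> (\<Sum>r<R. (a + real r)\<^sup>2)"
  assumes M: "prob_space M"
    and smooth: "smooth_with_grad f grad \<beta>"
    and sconv: "strongly_convex f \<mu>"
    and minimizer: "\<forall>v. f wstar \<le> f v"
    and K: "K \<ge> 1" and R: "R \<ge> 1" and H: "H \<ge> 1"
    and layers: "\<forall>i. layer i \<in> {1..L}"
    and Hl: "\<forall>l\<in>{1..L}. 1 \<le> Hl l \<and> Hl l \<le> H"
    and a: "a > max (16 * (\<beta> / \<mu>)) (real H)"
    and g_meas: "(\<lambda>(v, x). g v x) \<in> borel_measurable (borel \<Otimes>\<^sub>M N)"
    and xi_meas: "\<forall>r k. \<xi> r k \<in> measurable M N"
    and xi_indep: "prob_space.indep_vars M (\<lambda>_. N) (\<lambda>(r, k). \<xi> r k) (UNIV \<times> {1..K})"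
    and unbiased: "\<forall>r k v. integrable (distr M N (\<xi> r k)) (g v)
                     \<and> (\<integral>x. g v x \<partial>distr M N (\<xi> r k)) = grad v"
    and variance: "\<forall>r<R. \<forall>k\<in>{1..K}. AE \<omega> in M.
        (\<integral>\<^sup>+x. ennreal ((norm (g (w r k \<omega>) x - grad (w r k \<omega>)))\<^sup>2) \<partial>distr M N (\<xi> r k))
          \<le> ennreal (\<sigma>\<^sup>2)"
    and second_moment: "\<forall>r<R. \<forall>k\<in>{1..K}. AE \<omega> in M.
        (\<integral>\<^sup>+x. ennreal ((norm (g (w r k \<omega>) x))\<^sup>2) \<partial>distr M N (\<xi> r k))
          \<le> ennreal (G\<^sup>2)"
  shows "(\<integral>\<^sup>+\<omega>. ennreal (f ((1 / (real K * S)) *\<^sub>R (\<Sum>k=1..K. \<Sum>r<R. p r *\<^sub>R w r k \<omega>)) - f wstar) \<partial>M)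
      \<le> ennreal (\<mu> * a ^ 3 / (2 * S) * (norm (w0 - wstar))\<^sup>2
                 + 4 * real R * (real R + 2 * a) / (\<mu> * real K * S) * \<sigma>\<^sup>2
                 + 256 * real R / (\<mu>\<^sup>2 * S) * G\<^sup>2 * (real H)\<^sup>2 * \<beta>)"
proof -
  have "partial_sync_local_sgd M N f grad g \<xi> w0 wstar \<beta> \<mu> a \<sigma> G K R H layer Hl"
    using M smooth sconv minimizer K R H a g_meas xi_meas xi_indep unbiased
      variance[unfolded w_def] second_moment[unfolded w_def]
    by (rule partial_sync_local_sgd.intro)
  then show ?thesis
    unfolding w_def p_def S_def by (rule partial_sync_local_sgd.expected_gap_le)
qed

end
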